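(* Let $K_0$ be a number field, $K$ a finite Galois extension of $K_0$, $R$ the ring of integers of $K$, and $0\ne b\in R$. Then there exists $z\in R\setminus R^\times$ which is a primitive element of $K/K_0$ such that its conjugates $z^\gamma$, $\gamma\in\operatorname{Gal}(K/K_0)$, are pairwise coprime (i.e. $z^\gamma R+z^{\delta}R=R$ for $\gamma\ne\delta$), and each conjugate of $z$ is coprime to $b$. *)

theory Defs
  imports Complex_Main "HOL-Computational_Algebra.Polynomial"
begin

text \<open>Number fields are modelled as subfields of the complex numbers.\<close>

definition is_subfield :: "complex set \<Rightarrow> bool" where
  "is_subfield S \<longleftrightarrow> 0 \<in> S \<and> 1 \<in> S \<and>
     (\<forall>x\<in>S. \<forall>y\<in>S. x + y \<in> S \<and> x - y \<in> S \<and> x * y \<in> S) \<and>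
     (\<forall>x\<in>S. x \<noteq> 0 \<longrightarrow> inverse x \<in> S)"

definition finite_ext :: "complex set \<Rightarrow> complex set \<Rightarrow> bool" where
  "finite_ext F K \<longleftrightarrow> is_subfield F \<and> is_subfield K \<and> F \<subseteq> K \<and>
     (\<exists>B. finite B \<and> B \<subseteq> K \<and>
        K = {y. \<exists>c. (\<forall>b\<in>B. c b \<in> F) \<and> y = (\<Sum>b\<in>B. c b * b)})"

definition number_field :: "complex set \<Rightarrow> bool" where
  "number_field K \<longleftrightarrow> finite_ext \<rat> K"

definition Gal :: "complex set \<Rightarrow> complex set \<Rightarrow> (complex \<Rightarrow> complex) set" where
  "Gal F K = {\<sigma>. bij_betw \<sigma> K K \<and>
      (\<forall>x\<in>K. \<forall>y\<in>K. \<sigma> (x + y) = \<sigma> x + \<sigma> y \<and> \<sigma> (x * y) = \<sigma> x * \<sigma> y) \<and>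
      (\<forall>x\<in>F. \<sigma> x = x) \<and> (\<forall>x. x \<notin> K \<longrightarrow> \<sigma> x = x)}"

definition galois_ext :: "complex set \<Rightarrow> complex set \<Rightarrow> bool" where
  "galois_ext F K \<longleftrightarrow> finite_ext F K \<and> {x\<in>K. \<forall>\<sigma>\<in>Gal F K. \<sigma> x = x} = F"

definition ring_of_integers :: "complex set \<Rightarrow> complex set" where
  "ring_of_integers K = {x\<in>K. algebraic_int x}"

definition primitive_element :: "complex set \<Rightarrow> complex set \<Rightarrow> complex \<Rightarrow> bool" where
  "primitive_element F K z \<longleftrightarrow> z \<in> K \<and>
     (\<forall>L. is_subfield L \<and> F \<subseteq> L \<and> z \<in> L \<longrightarrow> K \<subseteq> L)"

definition is_unit_in :: "complex set \<Rightarrow> complex \<Rightarrow> bool" where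
  "is_unit_in R x \<longleftrightarrow> x \<in> R \<and> (\<exists>y\<in>R. x * y = 1)"

definition coprime_in :: "complex set \<Rightarrow> complex \<Rightarrow> complex \<Rightarrow> bool" where
  "coprime_in R a b \<longleftrightarrow> (\<exists>u\<in>R. \<exists>v\<in>R. u * a + v * b = 1)"

end

theory Submission
  imports Defs "Jordan_Normal_Form.Char_Poly"
begin

text \<open>Choose an algebraic integer \<open>w \<in> K\<close> whose conjugates \<open>\<gamma> w\<close>, \<open>\<gamma> \<in> Gal(K/K\<^sub>0)\<close>, are
  pairwise distinct, and a nonzero rational integer \<open>c\<close> that is divisible in \<open>R\<close> by \<open>b\<close> and by
  every difference \<open>\<gamma> w - \<delta> w\<close>, \<open>\<gamma> \<noteq> \<delta>\<close>. The conjugates of \<open>z = 1 + c w\<close> are the elements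
  \<open>1 + c \<gamma> w\<close>: they are pairwise distinct, so \<open>z\<close> is primitive; they are pairwise coprime because
  \<open>c \<in> (\<gamma> w - \<delta> w) R\<close>; and they are \<open>\<equiv> 1\<close> modulo \<open>b\<close>. Replacing \<open>c\<close> by a suitable
  multiple makes \<open>z\<close> a non-unit: the norm of \<open>1 + x w\<close> over \<open>\<rat>\<close> is a nonconstant polynomial
  in \<open>x\<close>, so it is \<open>\<plusminus>1\<close> for only finitely many \<open>x\<close>.\<close>

section \<open>Algebraic integers\<close>

definition int_span :: "(nat \<Rightarrow> complex) \<Rightarrow> nat \<Rightarrow> complex set" where
  "int_span V N = {s. \<exists>c. s = (\<Sum>i<N. of_int (c i) * V i)}"

lemma int_span_0: "0 \<in> int_span V N"
  unfolding int_span_def by (rule CollectI, rule exI[of _ "\<lambda>_. 0"]) simp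

lemma int_span_add: "a \<in> int_span V N \<Longrightarrow> b \<in> int_span V N \<Longrightarrow> a + b \<in> int_span V N"
proof -
  assume "a \<in> int_span V N" "b \<in> int_span V N"
  then obtain c d where "a = (\<Sum>i<N. of_int (c i) * V i)" "b = (\<Sum>i<N. of_int (d i) * V i)"
    by (auto simp: int_span_def)
  then have "a + b = (\<Sum>i<N. of_int (c i + d i) * V i)"
    by (simp add: sum.distrib distrib_right)
  then show ?thesis unfolding int_span_def by (intro CollectI exI)
qed

lemma int_span_of_int_mult: "a \<in> int_span V N \<Longrightarrow> of_int k * a \<in> int_span V N"
proof -
  assume "a \<in> int_span V N"
  then obtain c where "a = (\<Sum>i<N. of_int (c i) * V i)" by (auto simp: int_span_def)
  then have "of_int k * a = (\<Sum>i<N. of_int (k * c i) * V i)"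
    by (simp add: sum_distrib_left mult.assoc)
  then show ?thesis unfolding int_span_def by (intro CollectI exI)
qed

lemma int_span_sum:
  "(\<And>a. a \<in> A \<Longrightarrow> f a \<in> int_span V N) \<Longrightarrow> sum f A \<in> int_span V N"
  by (induction A rule: infinite_finite_induct) (auto intro: int_span_add int_span_0)

lemma int_span_generator: "j < N \<Longrightarrow> V j \<in> int_span V N"
proof -
  assume "j < N"
  have "(\<Sum>i<N. of_int (if i = j then 1 else 0) * V i) = (\<Sum>i<N. if i = j then V i else 0)"
    by (intro sum.cong) auto
  then have "V j = (\<Sum>i<N. of_int (if i = j then 1 else 0) * V i)"
    using \<open>j < N\<close> by simp
  then show ?thesis unfolding int_span_def by (intro CollectI exI)
qed

lemma int_span_mult_closed:
  assumes "\<And>j. j < N \<Longrightarrow> x * V j \<in> int_span V N" "a \<in> int_span V N"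
  shows "x * a \<in> int_span V N"
proof -
  obtain c where "a = (\<Sum>i<N. of_int (c i) * V i)" using assms(2) by (auto simp: int_span_def)
  then have "x * a = (\<Sum>i<N. of_int (c i) * (x * V i))"
    by (simp add: sum_distrib_left mult.left_commute)
  also have "\<dots> \<in> int_span V N"
    by (intro int_span_sum int_span_of_int_mult assms(1)) auto
  finally show ?thesis .
qed

text \<open>The relation says that \<open>(V 0, \<dots>, V (N - 1)) \<noteq> 0\<close> is an eigenvector of the matrix
  \<open>(h (c k i))\<^sub>k\<^sub>i\<close> for the eigenvalue \<open>lam\<close>.\<close>
lemma root_of_monic_if_mult_relation:
  fixes h :: "'a :: comm_ring_1 \<Rightarrow> complex" and c :: "nat \<Rightarrow> nat \<Rightarrow> 'a"
  assumes h: "comm_ring_hom h" and V: "V j \<noteq> 0" "j < N"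
    and rel: "\<And>k. k < N \<Longrightarrow> lam * V k = (\<Sum>i<N. h (c k i) * V i)"
  obtains p :: "'a poly" where "lead_coeff p = 1" "poly (map_poly h p) lam = 0"
proof -
  interpret h: comm_ring_hom h by (rule h)
  define M where "M = mat N N (\<lambda>(k, i). c k i)"
  define v where "v = vec N V"
  have M: "M \<in> carrier_mat N N" by (simp add: M_def)
  have hM: "map_mat h M \<in> carrier_mat N N" using M by simp
  have "map_mat h M *\<^sub>v v = lam \<cdot>\<^sub>v v"
  proof (rule eq_vecI)
    fix k assume "k < dim_vec (lam \<cdot>\<^sub>v v)"
    then have k: "k < N" by (simp add: v_def)
    then have "(map_mat h M *\<^sub>v v) $ k = (\<Sum>i<N. h (c k i) * V i)"
      by (simp add: M_def v_def mult_mat_vec_def scalar_prod_def atLeast0LessThan)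
    also have "\<dots> = (lam \<cdot>\<^sub>v v) $ k" using rel[OF k] k by (simp add: v_def)
    finally show "(map_mat h M *\<^sub>v v) $ k = (lam \<cdot>\<^sub>v v) $ k" .
  qed (simp add: M_def v_def)
  moreover have "v \<noteq> 0\<^sub>v N" "v \<in> carrier_vec N"
    using V by (auto simp: v_def dest!: arg_cong[where f = "\<lambda>u. u $ j"])
  ultimately have "eigenvalue (map_mat h M) lam"
    unfolding eigenvalue_def eigenvector_def using hM by auto
  then have "poly (char_poly (map_mat h M)) lam = 0"
    using eigenvalue_root_char_poly[OF hM] by blast
  then have "poly (map_poly h (char_poly M)) lam = 0"
    using h.char_poly_hom[OF M] by simp
  moreover have "lead_coeff (char_poly M) = 1"
    using degree_monic_char_poly[OF M] by simp
  ultimately show ?thesis using that by blast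
qed

lemma algebraic_int_if_int_span_stable:
  assumes "V j \<noteq> 0" "j < N" and stable: "\<And>k. k < N \<Longrightarrow> lam * V k \<in> int_span V N"
  shows "algebraic_int lam"
proof -
  have "\<forall>k. \<exists>c. k < N \<longrightarrow> lam * V k = (\<Sum>i<N. of_int (c i) * V i)"
    using stable by (auto simp: int_span_def)
  then obtain c where "\<And>k. k < N \<Longrightarrow> lam * V k = (\<Sum>i<N. of_int (c k i) * V i)"
    by metis
  then obtain p :: "int poly" where "lead_coeff p = 1" "poly (of_int_poly p) lam = 0"
    using root_of_monic_if_mult_relation[where V = V and j = j,
        OF of_int_hom.comm_ring_hom_axioms assms(1,2)] by blast
  then show ?thesis unfolding algebraic_int_altdef_ipoly by blast
qed

lemma algebraic_if_rat_mult_relation: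
  fixes V :: "nat \<Rightarrow> complex"
  assumes "V j \<noteq> 0" "j < N"
    and rel: "\<And>k. k < N \<Longrightarrow> \<exists>c :: nat \<Rightarrow> rat. lam * V k = (\<Sum>i<N. of_rat (c i) * V i)"
  shows "algebraic lam"
proof -
  obtain c where "\<And>k. k < N \<Longrightarrow> lam * V k = (\<Sum>i<N. of_rat (c k i) * V i)"
    using rel by metis
  then obtain p :: "rat poly" where p: "lead_coeff p = 1" "poly (map_poly of_rat p) lam = 0"
    using root_of_monic_if_mult_relation[where V = V and j = j,
        OF of_rat_hom.comm_ring_hom_axioms assms(1,2)] by blast
  then have "map_poly (of_rat :: rat \<Rightarrow> complex) p \<noteq> 0" by auto
  then show ?thesis
    using p(2) by (intro algebraicI'[of "map_poly of_rat p"]) (auto simp: coeff_map_poly)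
qed

lemma algebraic_int_monic_relation:
  assumes "algebraic_int (x :: complex)"
  obtains n a where "n \<ge> 1" "x ^ n = (\<Sum>l<n. of_int (a l) * x ^ l)"
proof -
  obtain p :: "int poly" where p: "poly (of_int_poly p) x = 0" "lead_coeff p = 1"
    using assms unfolding algebraic_int_altdef_ipoly by blast
  have "degree p \<noteq> 0"
  proof
    assume "degree p = 0"
    then have "p = [:1:]" using degree_0_id[of p] p(2) by simp
    then show False using p(1) by simp
  qed
  moreover have "0 = (\<Sum>i<degree p. of_int (coeff p i) * x ^ i) + x ^ degree p"
    using p by (simp add: poly_altdef coeff_map_poly degree_map_poly lessThan_Suc_atMost[symmetric])
  then have "x ^ degree p = (\<Sum>l<degree p. of_int (- coeff p l) * x ^ l)"
    by (simp add: sum_negf eq_neg_iff_add_eq_0 add.commute)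
  ultimately show ?thesis using that[of "degree p" "\<lambda>l. - coeff p l"] by simp
qed

lemma mult_power_in_int_span:
  assumes rel: "x ^ n = (\<Sum>l<n. of_int (a l) * x ^ l)"
    and span: "\<And>l. l < n \<Longrightarrow> x ^ l * t \<in> int_span V N" and "i < n"
  shows "x * (x ^ i * t) \<in> int_span V N"
proof (cases "Suc i < n")
  case True
  then show ?thesis using span[OF True] by (simp add: mult.assoc)
next
  case False
  then have "Suc i = n" using \<open>i < n\<close> by simp
  then have "x * (x ^ i * t) = x ^ n * t" by (metis mult.assoc power_Suc)
  also have "\<dots> = (\<Sum>l<n. of_int (a l) * (x ^ l * t))"
    unfolding rel by (simp add: sum_distrib_right mult.assoc)
  also have "\<dots> \<in> int_span V N"
    by (intro int_span_sum int_span_of_int_mult span) auto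
  finally show ?thesis .
qed

lemma algebraic_int_if_monic_relation:
  assumes "n \<ge> 1" and rel: "x ^ n = (\<Sum>l<n. of_int (a l) * x ^ l)"
  shows "algebraic_int (x :: complex)"
proof (rule algebraic_int_if_int_span_stable[of "\<lambda>l. x ^ l" 0 n])
  fix k assume "k < n"
  have "x * (x ^ k * 1) \<in> int_span (\<lambda>l. x ^ l) n"
    by (rule mult_power_in_int_span[OF rel _ \<open>k < n\<close>]) (simp add: int_span_generator)
  then show "x * x ^ k \<in> int_span (\<lambda>l. x ^ l) n" by simp
qed (use assms in auto)

lemma algebraic_int_add_mult:
  assumes "algebraic_int (x :: complex)" "algebraic_int y"
  shows "algebraic_int (x + y) \<and> algebraic_int (x * y)"
proof -
  obtain n a where n: "n \<ge> 1" and x: "x ^ n = (\<Sum>l<n. of_int (a l) * x ^ l)"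
    using algebraic_int_monic_relation[OF assms(1)] .
  obtain m b where m: "m \<ge> 1" and y: "y ^ m = (\<Sum>l<m. of_int (b l) * y ^ l)"
    using algebraic_int_monic_relation[OF assms(2)] .
  define V where "V k = x ^ (k div m) * y ^ (k mod m)" for k
  \<comment> \<open>the products \<open>x\<^sup>i y\<^sup>j\<close> with \<open>i < n\<close>, \<open>j < m\<close>, indexed by \<open>k = i m + j\<close>\<close>
  have span: "x ^ i * y ^ j \<in> int_span V (n * m)" if "i < n" "j < m" for i j
  proof -
    have "i * m + j < Suc i * m" using that by simp
    also have "\<dots> \<le> n * m" using that by (intro mult_right_mono) auto
    finally have "i * m + j < n * m" .
    moreover have "V (i * m + j) = x ^ i * y ^ j" using that by (simp add: V_def)
    ultimately show ?thesis by (metis int_span_generator)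
  qed
  have stable: "x * V k \<in> int_span V (n * m) \<and> y * V k \<in> int_span V (n * m)"
    if "k < n * m" for k
  proof
    have ij: "k div m < n" "k mod m < m"
      using that m by (auto simp: less_mult_imp_div_less)
    have "x * (x ^ (k div m) * y ^ (k mod m)) \<in> int_span V (n * m)"
      by (rule mult_power_in_int_span[OF x _ ij(1)]) (use span ij in auto)
    then show "x * V k \<in> int_span V (n * m)" by (simp add: V_def)
    have "y * (y ^ (k mod m) * x ^ (k div m)) \<in> int_span V (n * m)"
      by (rule mult_power_in_int_span[OF y _ ij(2)]) (metis span ij(1) mult.commute)
    then show "y * V k \<in> int_span V (n * m)" by (simp add: V_def mult.commute)
  qed
  have V0: "V 0 \<noteq> 0" "0 < n * m" using n m by (auto simp: V_def)
  have "algebraic_int (x + y)"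
    by (rule algebraic_int_if_int_span_stable[of V 0, OF V0])
      (use stable in \<open>auto simp: distrib_right intro: int_span_add\<close>)
  moreover have "algebraic_int (x * y)"
  proof (rule algebraic_int_if_int_span_stable[of V 0, OF V0])
    fix k assume "k < n * m"
    have "x * (y * V k) \<in> int_span V (n * m)"
      by (rule int_span_mult_closed) (use stable \<open>k < n * m\<close> in auto)
    then show "x * y * V k \<in> int_span V (n * m)" by (simp add: mult.assoc)
  qed
  ultimately show ?thesis ..
qed

lemma algebraic_int_add [intro]: "algebraic_int (x :: complex) \<Longrightarrow> algebraic_int y \<Longrightarrow> algebraic_int (x + y)"
  and algebraic_int_mult [intro]: "algebraic_int (x :: complex) \<Longrightarrow> algebraic_int y \<Longrightarrow> algebraic_int (x * y)"
  using algebraic_int_add_mult by blast+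

lemma algebraic_int_diff [intro]: "algebraic_int (x :: complex) \<Longrightarrow> algebraic_int y \<Longrightarrow> algebraic_int (x - y)"
  using algebraic_int_add[of x "- y"] by auto

lemma algebraic_int_of_int [intro]: "algebraic_int (of_int k :: complex)"
  by (intro int_imp_algebraic_int) simp

lemma algebraic_int_prod_list [intro]:
  "(\<And>a. a \<in> set as \<Longrightarrow> algebraic_int (f a :: complex)) \<Longrightarrow> algebraic_int (\<Prod>a\<leftarrow>as. f a)"
  by (induction as) auto

lemma algebraic_int_poly_of_int [intro]:
  "algebraic_int (x :: complex) \<Longrightarrow> algebraic_int (poly (of_int_poly q) x)"
  by (induction q) (auto simp: map_poly_pCons)

lemma algebraic_imp_algebraic_int_multiple:
  assumes "algebraic (x :: complex)"
  obtains a :: int where "a \<noteq> 0" "algebraic_int (of_int a * x)"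
proof -
  obtain p where p: "\<forall>i. coeff p i \<in> \<int>" "p \<noteq> 0" "poly p x = 0"
    using assms unfolding algebraic_def by blast
  have "\<forall>i. \<exists>k. coeff p i = of_int k" using p(1) by (metis Ints_cases)
  then obtain ci where ci: "\<And>i. coeff p i = of_int (ci i)" by metis
  define d where "d = degree p"
  define a where "a = ci d"
  have a0: "a \<noteq> 0" using p(2) ci[of d] by (auto simp: a_def d_def)
  have d0: "d \<noteq> 0"
  proof
    assume "d = 0"
    then have "poly p x = coeff p 0" by (simp add: d_def poly_altdef)
    then show False using p(2,3) \<open>d = 0\<close> by (metis d_def leading_coeff_0_iff)
  qed
  have "0 = (\<Sum>i\<le>d. coeff p i * x ^ i)" using p(3) by (simp add: poly_altdef d_def)
  then have lead: "of_int a * x ^ d = - (\<Sum>i<d. of_int (ci i) * x ^ i)"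
    by (simp add: ci a_def lessThan_Suc_atMost[symmetric] eq_neg_iff_add_eq_0 add.commute)
  define y where "y = of_int a * x"
  have "y ^ d = of_int a ^ (d - 1) * (of_int a * x ^ d)"
    using d0 by (cases d) (simp_all add: y_def power_mult_distrib mult_ac)
  also have "\<dots> = - (\<Sum>i<d. of_int a ^ (d - 1) * (of_int (ci i) * x ^ i))"
    unfolding lead by (simp add: sum_distrib_left)
  also have "\<dots> = (\<Sum>i<d. of_int (- ci i * a ^ (d - 1 - i)) * y ^ i)"
    unfolding sum_negf[symmetric]
  proof (intro sum.cong refl)
    fix i assume "i \<in> {..<d}"
    then have "(of_int a :: complex) ^ (d - 1) = of_int a ^ (d - 1 - i) * of_int a ^ i"
      by (simp flip: power_add)
    then show "- (of_int a ^ (d - 1) * (of_int (ci i) * x ^ i)) =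
        of_int (- ci i * a ^ (d - 1 - i)) * y ^ i"
      by (simp add: y_def power_mult_distrib mult_ac)
  qed
  finally have "algebraic_int y"
    by (rule algebraic_int_if_monic_relation[rotated]) (use d0 in simp)
  then show ?thesis using that a0 by (simp add: y_def)
qed

lemma rational_algebraic_int_unit:
  assumes "x \<in> \<rat>" "algebraic_int x" "algebraic_int y" "x * y = (1 :: complex)"
  shows "x \<in> {1, - 1}"
proof -
  obtain u where u: "x = of_int u" using assms(1,2) rational_algebraic_int_is_int Ints_cases by metis
  have "y = inverse x" using inverse_unique[OF assms(4)] by simp
  then have "y \<in> \<rat>" using assms(1) by simp
  then obtain v where v: "y = of_int v" using assms(3) rational_algebraic_int_is_int Ints_cases by metis
  have "u * v = 1" using assms(4) unfolding u v by (metis of_int_eq_1_iff of_int_mult)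
  then have "u = 1 \<or> u = - 1" by (rule pos_zmult_eq_1_iff_lemma)
  then show ?thesis using u by auto
qed

section \<open>Subfields of \<open>\<complex>\<close> and their homomorphisms\<close>

lemma subfield_0: "is_subfield S \<Longrightarrow> 0 \<in> S"
  and subfield_1: "is_subfield S \<Longrightarrow> 1 \<in> S"
  and subfield_add: "is_subfield S \<Longrightarrow> x \<in> S \<Longrightarrow> y \<in> S \<Longrightarrow> x + y \<in> S"
  and subfield_diff: "is_subfield S \<Longrightarrow> x \<in> S \<Longrightarrow> y \<in> S \<Longrightarrow> x - y \<in> S"
  and subfield_mult: "is_subfield S \<Longrightarrow> x \<in> S \<Longrightarrow> y \<in> S \<Longrightarrow> x * y \<in> S"
  unfolding is_subfield_def by blast+

lemma subfield_inverse: "is_subfield S \<Longrightarrow> x \<in> S \<Longrightarrow> inverse x \<in> S"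
  by (cases "x = 0") (auto simp: is_subfield_def)

lemma subfield_uminus: "is_subfield S \<Longrightarrow> x \<in> S \<Longrightarrow> - x \<in> S"
  using subfield_diff[of S 0 x] subfield_0 by simp

lemma subfield_divide: "is_subfield S \<Longrightarrow> x \<in> S \<Longrightarrow> y \<in> S \<Longrightarrow> x / y \<in> S"
  by (simp add: divide_inverse subfield_mult subfield_inverse)

lemma subfield_power: "is_subfield S \<Longrightarrow> x \<in> S \<Longrightarrow> x ^ n \<in> S"
  by (induction n) (auto intro: subfield_1 subfield_mult)

lemma subfield_of_nat: "is_subfield S \<Longrightarrow> of_nat n \<in> S"
  by (induction n) (auto intro: subfield_0 subfield_1 subfield_add)

lemma subfield_of_int: assumes "is_subfield S" shows "of_int k \<in> S"
proof (cases "k \<ge> 0")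
  case True
  then have "of_int k = (of_nat (nat k) :: complex)" by simp
  then show ?thesis using subfield_of_nat[OF assms] by metis
next
  case False
  then have "of_int k = - (of_nat (nat (- k)) :: complex)" by simp
  then show ?thesis using subfield_uminus[OF assms subfield_of_nat[OF assms]] by metis
qed

lemma subfield_Rats: "is_subfield S \<Longrightarrow> x \<in> \<rat> \<Longrightarrow> x \<in> S"
  by (auto elim!: Rats_cases' intro!: subfield_divide subfield_of_int)

lemma subfield_sum: "is_subfield S \<Longrightarrow> (\<And>a. a \<in> A \<Longrightarrow> f a \<in> S) \<Longrightarrow> sum f A \<in> S"
  by (induction A rule: infinite_finite_induct) (auto intro: subfield_0 subfield_add)

definition poly_over :: "complex set \<Rightarrow> complex poly \<Rightarrow> bool" where
  "poly_over S p \<longleftrightarrow> (\<forall>i. coeff p i \<in> S)"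

lemma poly_over_poly: "is_subfield S \<Longrightarrow> poly_over S p \<Longrightarrow> x \<in> S \<Longrightarrow> poly p x \<in> S"
  unfolding poly_over_def poly_altdef
  by (auto intro!: subfield_sum subfield_mult subfield_power)

lemma poly_over_subset: "poly_over S p \<Longrightarrow> S \<subseteq> T \<Longrightarrow> poly_over T p"
  unfolding poly_over_def by blast

context
  fixes S assumes S: "is_subfield S"
begin

lemma poly_over_add: "poly_over S p \<Longrightarrow> poly_over S q \<Longrightarrow> poly_over S (p + q)"
  by (auto simp: poly_over_def intro: subfield_add[OF S])

lemma poly_over_mult: "poly_over S p \<Longrightarrow> poly_over S q \<Longrightarrow> poly_over S (p * q)"
  unfolding poly_over_def coeff_mult by (auto intro!: subfield_sum[OF S] subfield_mult[OF S])

lemma poly_over_smult: "a \<in> S \<Longrightarrow> poly_over S p \<Longrightarrow> poly_over S (Polynomial.smult a p)"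
  by (auto simp: poly_over_def intro: subfield_mult[OF S])

lemma poly_over_linear: "x \<in> S \<Longrightarrow> poly_over S [:- x, 1:]"
  by (auto simp: poly_over_def coeff_pCons split: nat.splits
      intro: subfield_uminus[OF S] subfield_1[OF S] subfield_0[OF S])

lemma poly_over_sum: "(\<And>a. a \<in> A \<Longrightarrow> poly_over S (f a)) \<Longrightarrow> poly_over S (sum f A)"
proof (induction A rule: infinite_finite_induct)
  case (insert x F)
  then show ?case by (simp add: poly_over_add)
qed (simp_all add: poly_over_def subfield_0[OF S])

lemma poly_over_prod: "(\<And>a. a \<in> A \<Longrightarrow> poly_over S (f a)) \<Longrightarrow> poly_over S (prod f A)"
proof (induction A rule: infinite_finite_induct)
  case (insert x F)
  then show ?case by (simp add: poly_over_mult)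
qed (simp_all add: poly_over_def coeff_1 subfield_0[OF S] subfield_1[OF S])

end

text \<open>Elements of \<open>Gal F K\<close> are the identity outside \<open>K\<close>, so they are ring homomorphisms
  on \<open>K\<close> only.\<close>
locale subfield_hom =
  fixes K :: "complex set" and \<sigma> :: "complex \<Rightarrow> complex"
  assumes subfield: "is_subfield K"
    and hom_add: "x \<in> K \<Longrightarrow> y \<in> K \<Longrightarrow> \<sigma> (x + y) = \<sigma> x + \<sigma> y"
    and hom_mult: "x \<in> K \<Longrightarrow> y \<in> K \<Longrightarrow> \<sigma> (x * y) = \<sigma> x * \<sigma> y"
    and hom_1: "\<sigma> 1 = 1"
begin

lemma hom_0: "\<sigma> 0 = 0"
  using hom_add[of 0 0] subfield_0[OF subfield] by simp

lemma hom_uminus: "x \<in> K \<Longrightarrow> \<sigma> (- x) = - \<sigma> x"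
  using hom_add[of x "- x"] subfield_uminus[OF subfield] hom_0
  by (simp add: eq_neg_iff_add_eq_0 add.commute)

lemma hom_sum: "(\<And>a. a \<in> A \<Longrightarrow> f a \<in> K) \<Longrightarrow> \<sigma> (sum f A) = (\<Sum>a\<in>A. \<sigma> (f a))"
  by (induction A rule: infinite_finite_induct) (auto simp: hom_0 hom_add subfield_sum[OF subfield])

lemma hom_power: "x \<in> K \<Longrightarrow> \<sigma> (x ^ n) = \<sigma> x ^ n"
  by (induction n) (auto simp: hom_1 hom_mult subfield_power[OF subfield])

lemma hom_poly:
  assumes "poly_over K p" "\<And>i. \<sigma> (coeff p i) = coeff p i" "x \<in> K"
  shows "\<sigma> (poly p x) = poly p (\<sigma> x)"
proof -
  have "\<sigma> (poly p x) = (\<Sum>i\<le>degree p. \<sigma> (coeff p i * x ^ i))"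
    unfolding poly_altdef using assms(1,3) poly_over_def
    by (intro hom_sum) (auto intro: subfield_mult[OF subfield] subfield_power[OF subfield])
  also have "\<dots> = poly p (\<sigma> x)"
    unfolding poly_altdef using assms poly_over_def
    by (intro sum.cong) (auto simp: hom_mult hom_power subfield_power[OF subfield])
  finally show ?thesis .
qed

lemma coeff_map_poly_hom: "coeff (map_poly \<sigma> p) n = \<sigma> (coeff p n)"
  by (rule coeff_map_poly) (rule hom_0)

lemma map_poly_hom_add:
  "poly_over K p \<Longrightarrow> poly_over K q \<Longrightarrow> map_poly \<sigma> (p + q) = map_poly \<sigma> p + map_poly \<sigma> q"
  by (rule poly_eqI) (simp add: coeff_map_poly_hom hom_add poly_over_def)

lemma map_poly_hom_mult:
  assumes "poly_over K p" "poly_over K q"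
  shows "map_poly \<sigma> (p * q) = map_poly \<sigma> p * map_poly \<sigma> q"
proof (rule poly_eqI)
  fix n
  have "coeff (map_poly \<sigma> (p * q)) n = (\<Sum>i\<le>n. \<sigma> (coeff p i * coeff q (n - i)))"
    unfolding coeff_map_poly_hom coeff_mult using assms
    by (intro hom_sum) (auto simp: poly_over_def intro: subfield_mult[OF subfield])
  also have "\<dots> = coeff (map_poly \<sigma> p * map_poly \<sigma> q) n"
    using assms by (auto simp: coeff_mult coeff_map_poly_hom poly_over_def hom_mult intro: sum.cong)
  finally show "coeff (map_poly \<sigma> (p * q)) n = coeff (map_poly \<sigma> p * map_poly \<sigma> q) n" .
qed

lemma map_poly_hom_smult:
  "a \<in> K \<Longrightarrow> poly_over K p \<Longrightarrow> map_poly \<sigma> (Polynomial.smult a p) = Polynomial.smult (\<sigma> a) (map_poly \<sigma> p)"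
  by (rule poly_eqI) (simp add: coeff_map_poly_hom hom_mult poly_over_def)

lemma map_poly_hom_linear: "x \<in> K \<Longrightarrow> map_poly \<sigma> [:- x, 1:] = [:- \<sigma> x, 1:]"
  by (rule poly_eqI)
    (auto simp: coeff_map_poly_hom coeff_pCons hom_uminus hom_0 hom_1 split: nat.splits)

lemma map_poly_hom_sum:
  "(\<And>a. a \<in> A \<Longrightarrow> poly_over K (f a)) \<Longrightarrow> map_poly \<sigma> (sum f A) = (\<Sum>a\<in>A. map_poly \<sigma> (f a))"
  by (induction A rule: infinite_finite_induct)
    (simp_all add: map_poly_hom_add poly_over_sum[OF subfield])

lemma map_poly_hom_prod:
  "(\<And>a. a \<in> A \<Longrightarrow> poly_over K (f a)) \<Longrightarrow> map_poly \<sigma> (prod f A) = (\<Prod>a\<in>A. map_poly \<sigma> (f a))"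
  by (induction A rule: infinite_finite_induct)
    (simp_all add: map_poly_1 hom_1 map_poly_hom_mult poly_over_prod[OF subfield])

end

section \<open>Spanning families of finite extensions\<close>

definition spans :: "complex set \<Rightarrow> nat \<Rightarrow> (nat \<Rightarrow> complex) \<Rightarrow> complex set \<Rightarrow> bool" where
  "spans F N e K \<longleftrightarrow> (\<forall>j<N. e j \<in> K) \<and>
     (\<forall>y. y \<in> K \<longleftrightarrow> (\<exists>c. (\<forall>j<N. c j \<in> F) \<and> y = (\<Sum>j<N. c j * e j)))"

lemma spansD:
  assumes "spans F N e K"
  shows "\<And>j. j < N \<Longrightarrow> e j \<in> K"
    and "\<And>y. y \<in> K \<Longrightarrow> \<exists>c. (\<forall>j<N. c j \<in> F) \<and> y = (\<Sum>j<N. c j * e j)"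
  using assms unfolding spans_def by blast+

lemma finite_ext_spans:
  assumes "finite_ext F K"
  obtains N e where "spans F N e K"
proof -
  obtain B where B: "finite B" "B \<subseteq> K"
    and K: "K = {y. \<exists>c. (\<forall>b\<in>B. c b \<in> F) \<and> y = (\<Sum>b\<in>B. c b * b)}"
    using assms unfolding finite_ext_def by blast
  obtain e where e: "bij_betw e {..<card B} B"
    using ex_bij_betw_nat_finite[OF B(1)] by (auto simp: atLeast0LessThan)
  have inv: "the_inv_into {..<card B} e (e j) = j" if "j < card B" for j
    using e that by (simp add: bij_betw_def the_inv_into_f_f)
  have "(\<exists>c. (\<forall>b\<in>B. c b \<in> F) \<and> y = (\<Sum>b\<in>B. c b * b)) \<longleftrightarrow>
      (\<exists>c. (\<forall>j<card B. c j \<in> F) \<and> y = (\<Sum>j<card B. c j * e j))" for y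
  proof
    assume "\<exists>c. (\<forall>b\<in>B. c b \<in> F) \<and> y = (\<Sum>b\<in>B. c b * b)"
    then obtain c where "\<forall>b\<in>B. c b \<in> F" "y = (\<Sum>b\<in>B. c b * b)" by blast
    then show "\<exists>c. (\<forall>j<card B. c j \<in> F) \<and> y = (\<Sum>j<card B. c j * e j)"
      using sum.reindex_bij_betw[OF e, of "\<lambda>b. c b * b"] bij_betw_apply[OF e]
      by (intro exI[of _ "\<lambda>j. c (e j)"]) auto
  next
    assume "\<exists>c. (\<forall>j<card B. c j \<in> F) \<and> y = (\<Sum>j<card B. c j * e j)"
    then obtain c where c: "\<forall>j<card B. c j \<in> F" "y = (\<Sum>j<card B. c j * e j)" by blast
    define d where "d b = c (the_inv_into {..<card B} e b)" for b
    have "y = (\<Sum>b\<in>B. d b * b)"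
      unfolding c(2) sum.reindex_bij_betw[OF e, of "\<lambda>b. d b * b", symmetric]
      by (intro sum.cong refl) (simp add: d_def inv)
    moreover have "d b \<in> F" if "b \<in> B" for b
    proof -
      obtain j where "j < card B" "b = e j" using e \<open>b \<in> B\<close> by (auto simp: bij_betw_def)
      then show ?thesis using c(1) inv by (simp add: d_def)
    qed
    ultimately show "\<exists>c. (\<forall>b\<in>B. c b \<in> F) \<and> y = (\<Sum>b\<in>B. c b * b)" by blast
  qed
  moreover have "\<forall>j<card B. e j \<in> K" using bij_betw_apply[OF e] B(2) by auto
  ultimately have "spans F (card B) e K" unfolding spans_def by (subst (2) K) auto
  then show ?thesis by (rule that)
qed

lemma sum_lessThan_mult_div_mod:
  fixes f :: "nat \<Rightarrow> nat \<Rightarrow> 'a::comm_monoid_add"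
  shows "(\<Sum>i<n. \<Sum>j<m. f i j) = (\<Sum>k<n * m. f (k div m) (k mod m))"
proof (cases "m = 0")
  case False
  have "bij_betw (\<lambda>k. (k div m, k mod m)) {..<n * m} ({..<n} \<times> {..<m})"
  proof (rule bij_betwI[where g = "\<lambda>(i, j). i * m + j"])
    show "(\<lambda>(i, j). i * m + j) \<in> {..<n} \<times> {..<m} \<rightarrow> {..<n * m}"
    proof clarsimp
      fix i j assume "i < n" "j < m"
      then have "i * m + j < Suc i * m" by simp
      also have "\<dots> \<le> n * m" using \<open>i < n\<close> by (intro mult_right_mono) auto
      finally show "i * m + j < n * m" .
    qed
  qed (use False in \<open>auto simp: less_mult_imp_div_less\<close>)
  then have "(\<Sum>k<n * m. f (k div m) (k mod m)) = (\<Sum>(i, j)\<in>{..<n} \<times> {..<m}. f i j)"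
    by (simp add: sum.reindex_bij_betw[symmetric])
  then show ?thesis by (simp add: sum.cartesian_product)
qed simp

lemma spans_trans:
  assumes K: "is_subfield K" and sub: "F \<subseteq> K" "E \<subseteq> K"
    and FE: "spans F n e0 E" and EK: "spans E m e K"
  shows "spans F (n * m) (\<lambda>k. e0 (k div m) * e (k mod m)) K"
proof -
  define V where "V k = e0 (k div m) * e (k mod m)" for k
  have idx: "k div m < n \<and> k mod m < m" if "k < n * m" for k
  proof -
    have "m > 0" using that by (cases "m = 0") auto
    then show ?thesis using that by (auto simp: less_mult_imp_div_less)
  qed
  have VK: "V k \<in> K" if "k < n * m" for k
  proof -
    have "k div m < n" "k mod m < m" using idx[OF that] by auto
    then show ?thesis unfolding V_def using spansD(1)[OF FE] spansD(1)[OF EK] sub(2)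
      by (blast intro: subfield_mult[OF K])
  qed
  have "\<exists>c. (\<forall>k<n * m. c k \<in> F) \<and> y = (\<Sum>k<n * m. c k * V k)" if "y \<in> K" for y
  proof -
    obtain c where c: "\<forall>j<m. c j \<in> E" "y = (\<Sum>j<m. c j * e j)"
      using spansD(2)[OF EK \<open>y \<in> K\<close>] by blast
    have "\<forall>j. \<exists>d. j < m \<longrightarrow> (\<forall>i<n. d i \<in> F) \<and> c j = (\<Sum>i<n. d i * e0 i)"
      using c(1) spansD(2)[OF FE] by blast
    then obtain d where d: "\<And>j. j < m \<Longrightarrow> (\<forall>i<n. d j i \<in> F) \<and> c j = (\<Sum>i<n. d j i * e0 i)"
      by metis
    have "y = (\<Sum>j<m. \<Sum>i<n. d j i * (e0 i * e j))"
      unfolding c(2) using d by (simp add: sum_distrib_right mult.assoc)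
    also have "\<dots> = (\<Sum>i<n. \<Sum>j<m. d j i * (e0 i * e j))"
      by (rule sum.swap)
    also have "\<dots> = (\<Sum>k<n * m. d (k mod m) (k div m) * V k)"
      by (simp only: sum_lessThan_mult_div_mod V_def)
    finally show ?thesis using d
      by (intro exI[of _ "\<lambda>k. d (k mod m) (k div m)"]) (auto dest: idx)
  qed
  moreover have "(\<Sum>k<n * m. c k * V k) \<in> K" if "\<forall>k<n * m. c k \<in> F" for c
    using that sub(1) VK by (auto intro!: subfield_sum[OF K] subfield_mult[OF K])
  ultimately show ?thesis using VK unfolding spans_def V_def[abs_def] by blast
qed

lemma algebraic_if_spans_Rats:
  assumes K: "is_subfield K" and span: "spans \<rat> N e K" and "x \<in> K"
  shows "algebraic x"
proof -
  have rat_coords: "\<exists>r :: nat \<Rightarrow> rat. y = (\<Sum>j<N. of_rat (r j) * e j)" if y: "y \<in> K" for y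
  proof -
    obtain c where c: "\<forall>j<N. c j \<in> \<rat>" "y = (\<Sum>j<N. c j * e j)"
      using spansD(2)[OF span y] by blast
    have "\<forall>j. \<exists>q. j < N \<longrightarrow> c j = of_rat q" using c(1) by (metis Rats_cases)
    then obtain r where "\<And>j. j < N \<Longrightarrow> c j = of_rat (r j)" by metis
    then show ?thesis unfolding c(2) by (intro exI[of _ r] sum.cong) auto
  qed
  obtain r1 where "1 = (\<Sum>j<N. of_rat (r1 j) * e j)"
    using rat_coords[OF subfield_1[OF K]] by blast
  then obtain j where j: "j < N" "e j \<noteq> 0"
    by (metis (no_types, lifting) lessThan_iff mult_zero_right sum.neutral zero_neq_one)
  show ?thesis
  proof (rule algebraic_if_rat_mult_relation[of e j, OF j(2,1)])
    fix k assume "k < N"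
    then have "x * e k \<in> K" using spansD(1)[OF span] \<open>x \<in> K\<close> by (blast intro: subfield_mult[OF K])
    then show "\<exists>c. x * e k = (\<Sum>i<N. of_rat (c i) * e i)" by (rule rat_coords)
  qed
qed

section \<open>The Galois group\<close>

lemma Gal_closed: "\<sigma> \<in> Gal F K \<Longrightarrow> x \<in> K \<Longrightarrow> \<sigma> x \<in> K"
  unfolding Gal_def by (auto dest: bij_betw_apply)

lemma Gal_fixes: "\<sigma> \<in> Gal F K \<Longrightarrow> x \<in> F \<Longrightarrow> \<sigma> x = x"
  and Gal_outside: "\<sigma> \<in> Gal F K \<Longrightarrow> x \<notin> K \<Longrightarrow> \<sigma> x = x"
  and Gal_add: "\<sigma> \<in> Gal F K \<Longrightarrow> x \<in> K \<Longrightarrow> y \<in> K \<Longrightarrow> \<sigma> (x + y) = \<sigma> x + \<sigma> y"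
  and Gal_mult: "\<sigma> \<in> Gal F K \<Longrightarrow> x \<in> K \<Longrightarrow> y \<in> K \<Longrightarrow> \<sigma> (x * y) = \<sigma> x * \<sigma> y"
  unfolding Gal_def by auto

lemma Gal_inj_on: "\<sigma> \<in> Gal F K \<Longrightarrow> inj_on \<sigma> K"
  unfolding Gal_def bij_betw_def by auto

lemma id_in_Gal: "(\<lambda>x. x) \<in> Gal F K"
  unfolding Gal_def by (auto simp: bij_betw_def)

lemma Gal_comp:
  assumes "\<sigma> \<in> Gal F K" "\<tau> \<in> Gal F K"
  shows "\<sigma> \<circ> \<tau> \<in> Gal F K"
proof -
  have "bij_betw (\<sigma> \<circ> \<tau>) K K" using assms unfolding Gal_def by (auto intro: bij_betw_trans)
  moreover have "\<forall>x\<in>K. \<forall>y\<in>K. (\<sigma> \<circ> \<tau>) (x + y) = (\<sigma> \<circ> \<tau>) x + (\<sigma> \<circ> \<tau>) y \<and>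
      (\<sigma> \<circ> \<tau>) (x * y) = (\<sigma> \<circ> \<tau>) x * (\<sigma> \<circ> \<tau>) y"
    using assms by (simp add: Gal_add Gal_mult Gal_closed)
  moreover have "\<forall>x\<in>F. (\<sigma> \<circ> \<tau>) x = x" "\<forall>x. x \<notin> K \<longrightarrow> (\<sigma> \<circ> \<tau>) x = x"
    using assms by (simp_all add: Gal_fixes Gal_outside)
  ultimately show ?thesis unfolding Gal_def by blast
qed

lemma Gal_subfield_hom:
  assumes "\<sigma> \<in> Gal F K" "finite_ext F K"
  shows "subfield_hom K \<sigma>"
proof
  show "is_subfield K" using assms(2) unfolding finite_ext_def by blast
  show "\<sigma> 1 = 1" using assms subfield_1 unfolding finite_ext_def by (blast intro: Gal_fixes)
qed (use assms(1) in \<open>auto intro: Gal_closed Gal_add Gal_mult\<close>)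

lemma Gal_comp_inj_on: "\<sigma> \<in> Gal F K \<Longrightarrow> inj_on (\<lambda>\<tau>. \<sigma> \<circ> \<tau>) (Gal F K)"
proof (rule inj_onI)
  fix \<tau>1 \<tau>2 assume s: "\<sigma> \<in> Gal F K" and t: "\<tau>1 \<in> Gal F K" "\<tau>2 \<in> Gal F K"
    and eq: "\<sigma> \<circ> \<tau>1 = \<sigma> \<circ> \<tau>2"
  show "\<tau>1 = \<tau>2"
  proof
    fix x show "\<tau>1 x = \<tau>2 x"
    proof (cases "x \<in> K")
      case True
      then show ?thesis using fun_cong[OF eq, of x] Gal_inj_on[OF s] Gal_closed[OF t(1)] Gal_closed[OF t(2)]
        by (auto dest: inj_onD)
    qed (use t in \<open>simp add: Gal_outside\<close>)
  qed
qed

locale galois_setting =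
  fixes K0 K :: "complex set"
  assumes number_field: "number_field K0" and galois: "galois_ext K0 K"
begin

abbreviation G where "G \<equiv> Gal K0 K"

lemma finite_ext: "finite_ext K0 K"
  using galois unfolding galois_ext_def by blast

lemma subfield_K0: "is_subfield K0" and subfield_K: "is_subfield K" and K0_subset: "K0 \<subseteq> K"
  using finite_ext unfolding finite_ext_def by blast+

lemma fixed_field: "{x\<in>K. \<forall>\<sigma>\<in>G. \<sigma> x = x} = K0"
  using galois unfolding galois_ext_def by blast

lemma Gal_hom: "\<sigma> \<in> G \<Longrightarrow> subfield_hom K \<sigma>"
  by (rule Gal_subfield_hom[OF _ finite_ext])

lemma Gal_fixes_Rats: "\<sigma> \<in> G \<Longrightarrow> x \<in> \<rat> \<Longrightarrow> \<sigma> x = x"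
  using Gal_fixes subfield_Rats[OF subfield_K0] by blast

lemma K_algebraic: "x \<in> K \<Longrightarrow> algebraic x"
proof -
  assume "x \<in> K"
  have "finite_ext \<rat> K0" using number_field unfolding number_field_def .
  then obtain n e0 where "spans \<rat> n e0 K0" by (rule finite_ext_spans)
  moreover obtain m e where "spans K0 m e K" using finite_ext by (rule finite_ext_spans)
  ultimately have "spans \<rat> (n * m) (\<lambda>k. e0 (k div m) * e (k mod m)) K"
    using subfield_Rats[OF subfield_K] K0_subset
    by (intro spans_trans[OF subfield_K]) auto
  then show "algebraic x" using \<open>x \<in> K\<close> by (rule algebraic_if_spans_Rats[OF subfield_K])
qed

lemma Gal_root:
  assumes "\<sigma> \<in> G" "\<forall>i. coeff p i \<in> \<rat>" "x \<in> K" "poly p x = 0"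
  shows "poly p (\<sigma> x) = 0"
proof -
  have "poly p (\<sigma> x) = \<sigma> (poly p x)"
    using assms(1-3) subfield_Rats[OF subfield_K]
    by (intro subfield_hom.hom_poly[OF Gal_hom, symmetric])
      (auto simp: poly_over_def Gal_fixes_Rats)
  then show ?thesis using assms(1,4) Gal_fixes subfield_0[OF subfield_K0] by simp
qed

lemma Gal_algebraic_int:
  assumes "\<sigma> \<in> G" "x \<in> K" "algebraic_int x"
  shows "algebraic_int (\<sigma> x)"
proof -
  obtain p where p: "lead_coeff p = 1" "\<forall>i. coeff p i \<in> \<int>" "poly p x = 0"
    using assms(3) by (auto simp: algebraic_int.simps)
  then have "poly p (\<sigma> x) = 0"
    using Ints_subset_Rats by (intro Gal_root[OF assms(1) _ assms(2)]) auto
  then show ?thesis using p by (intro algebraic_int.intros[of p]) auto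
qed

lemma Gal_eqI:
  assumes span: "spans K0 m e K" and "\<sigma> \<in> G" "\<tau> \<in> G"
    and agree: "\<And>j. j < m \<Longrightarrow> \<sigma> (e j) = \<tau> (e j)"
  shows "\<sigma> = \<tau>"
proof
  fix x show "\<sigma> x = \<tau> x"
  proof (cases "x \<in> K")
    case True
    then obtain c where c: "\<forall>j<m. c j \<in> K0" "x = (\<Sum>j<m. c j * e j)"
      using spansD(2)[OF span] by blast
    have e: "e j \<in> K" "c j \<in> K" if "j < m" for j
      using that c(1) spansD(1)[OF span] K0_subset by auto
    have conj: "\<rho> x = (\<Sum>j<m. c j * \<rho> (e j))" if "\<rho> \<in> G" for \<rho>
    proof -
      have "\<rho> x = (\<Sum>j<m. \<rho> (c j * e j))"
        unfolding c(2) using e by (intro subfield_hom.hom_sum[OF Gal_hom[OF that]])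
          (auto intro: subfield_mult[OF subfield_K])
      also have "\<dots> = (\<Sum>j<m. c j * \<rho> (e j))"
        using c(1) e Gal_mult[OF that] Gal_fixes[OF that] by (intro sum.cong) auto
      finally show ?thesis .
    qed
    show ?thesis using conj[OF \<open>\<sigma> \<in> G\<close>] conj[OF \<open>\<tau> \<in> G\<close>] agree by simp
  qed (use assms in \<open>simp add: Gal_outside\<close>)
qed

text \<open>An automorphism is determined by the images of a spanning family, and each image is a
  root of a fixed nonzero rational polynomial.\<close>
lemma finite_Gal: "finite G"
proof -
  obtain m e where span: "spans K0 m e K" using finite_ext by (rule finite_ext_spans)
  have "\<forall>j. \<exists>p. j < m \<longrightarrow> (\<forall>i. coeff p i \<in> \<int>) \<and> p \<noteq> 0 \<and> poly p (e j) = 0"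
    using K_algebraic spansD(1)[OF span] unfolding algebraic_def by blast
  then obtain P where P: "\<And>j. j < m \<Longrightarrow> (\<forall>i. coeff (P j) i \<in> \<int>) \<and> P j \<noteq> 0 \<and> poly (P j) (e j) = 0"
    by metis
  define \<Phi> where "\<Phi> \<sigma> = restrict (\<lambda>j. \<sigma> (e j)) {..<m}" for \<sigma> :: "complex \<Rightarrow> complex"
  have "\<Phi> ` G \<subseteq> PiE {..<m} (\<lambda>j. {r. poly (P j) r = 0})"
  proof
    fix f assume "f \<in> \<Phi> ` G"
    then obtain \<sigma> where \<sigma>: "\<sigma> \<in> G" "f = \<Phi> \<sigma>" by blast
    have "poly (P j) (\<sigma> (e j)) = 0" if "j < m" for j
    proof (rule Gal_root[OF \<sigma>(1) _ spansD(1)[OF span that]])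
      show "\<forall>i. coeff (P j) i \<in> \<rat>" using P[OF that] Ints_subset_Rats by blast
    qed (use P[OF that] in blast)
    then show "f \<in> PiE {..<m} (\<lambda>j. {r. poly (P j) r = 0})" using \<sigma>(2) by (simp add: \<Phi>_def)
  qed
  moreover have "finite (PiE {..<m} (\<lambda>j. {r. poly (P j) r = 0}))"
    using P poly_roots_finite by (intro finite_PiE) blast+
  moreover have "inj_on \<Phi> G"
  proof (rule inj_onI)
    fix \<sigma> \<tau> assume "\<sigma> \<in> G" "\<tau> \<in> G" and eq: "\<Phi> \<sigma> = \<Phi> \<tau>"
    have "\<sigma> (e j) = \<tau> (e j)" if "j < m" for j
      using fun_cong[OF eq, of j] that by (simp add: \<Phi>_def)
    then show "\<sigma> = \<tau>" by (rule Gal_eqI[OF span \<open>\<sigma> \<in> G\<close> \<open>\<tau> \<in> G\<close>])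
  qed
  ultimately show ?thesis using finite_imageD finite_subset by blast
qed

lemma Gal_comp_image: "\<sigma> \<in> G \<Longrightarrow> (\<lambda>\<tau>. \<sigma> \<circ> \<tau>) ` G = G"
  using endo_inj_surj[OF finite_Gal _ Gal_comp_inj_on] Gal_comp by blast

end

section \<open>Separating and primitive elements\<close>

definition poly_of_coeffs :: "nat \<Rightarrow> (nat \<Rightarrow> 'a :: comm_semiring_1) \<Rightarrow> 'a poly" where
  "poly_of_coeffs m c = (\<Sum>j<m. monom (c j) j)"

lemma coeff_poly_of_coeffs: "coeff (poly_of_coeffs m c) j = (if j < m then c j else 0)"
  unfolding poly_of_coeffs_def coeff_sum coeff_monom by (simp add: sum.delta')

lemma poly_poly_of_coeffs: "poly (poly_of_coeffs m c) x = (\<Sum>j<m. x ^ j * c j)"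
  by (simp add: poly_of_coeffs_def poly_sum poly_monom mult.commute)

lemma poly_of_coeffs_eqD: "poly_of_coeffs m c = poly_of_coeffs m d \<Longrightarrow> j < m \<Longrightarrow> c j = d j"
  using coeff_poly_of_coeffs[of m c j] coeff_poly_of_coeffs[of m d j] by simp

lemma exists_not_root_in_range:
  fixes f :: "nat \<Rightarrow> 'a :: idom"
  assumes "finite P" "0 \<notin> P" "inj f"
  obtains n where "\<And>p. p \<in> P \<Longrightarrow> poly p (f n) \<noteq> 0"
proof -
  have "finite (\<Union>p\<in>P. {x. poly p x = 0})"
    using assms(2) by (intro finite_UN_I assms(1) poly_roots_finite) auto
  then have "finite (f -` (\<Union>p\<in>P. {x. poly p x = 0}))"
    using assms(3) by (rule finite_vimageI)
  then obtain n where "n \<notin> f -` (\<Union>p\<in>P. {x. poly p x = 0})"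
    by (metis ex_new_if_finite infinite_UNIV_nat)
  then show ?thesis by (intro that) auto
qed

context galois_setting
begin

lemma Gal_sum_Rats_mult:
  assumes "\<sigma> \<in> G" "\<And>j. j \<in> A \<Longrightarrow> a j \<in> \<rat>" "\<And>j. j \<in> A \<Longrightarrow> e j \<in> K"
  shows "\<sigma> (\<Sum>j\<in>A. a j * e j) = (\<Sum>j\<in>A. a j * \<sigma> (e j))"
proof -
  have "\<sigma> (\<Sum>j\<in>A. a j * e j) = (\<Sum>j\<in>A. \<sigma> (a j * e j))"
    using assms subfield_Rats[OF subfield_K]
    by (intro subfield_hom.hom_sum[OF Gal_hom[OF assms(1)]] subfield_mult[OF subfield_K]) auto
  also have "\<dots> = (\<Sum>j\<in>A. a j * \<sigma> (e j))"
    using assms subfield_Rats[OF subfield_K] by (simp add: Gal_mult Gal_fixes_Rats)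
  finally show ?thesis .
qed

text \<open>For a spanning family \<open>e\<^sub>j\<close>, the conjugates of \<open>\<Sum>\<^sub>j t\<^sup>j e\<^sub>j\<close> are values at \<open>t\<close> of
  pairwise distinct polynomials, so a suitable natural number \<open>t\<close> separates them.\<close>
lemma exists_separating_element:
  obtains w where "w \<in> K" "w \<noteq> 0" "\<And>\<sigma> \<tau>. \<sigma> \<in> G \<Longrightarrow> \<tau> \<in> G \<Longrightarrow> \<sigma> \<noteq> \<tau> \<Longrightarrow> \<sigma> w \<noteq> \<tau> w"
proof -
  obtain m e where span: "spans K0 m e K" using finite_ext by (rule finite_ext_spans)
  define P where "P \<sigma> = poly_of_coeffs m (\<lambda>j. \<sigma> (e j))" for \<sigma> :: "complex \<Rightarrow> complex"
  define w where "w t = (\<Sum>j<m. of_nat t ^ j * e j)" for t :: nat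
  have w: "w t \<in> K" for t
    unfolding w_def using spansD(1)[OF span] subfield_K
    by (auto intro!: subfield_sum subfield_mult subfield_power subfield_of_nat)
  have conj: "\<sigma> (w t) = poly (P \<sigma>) (of_nat t)" if "\<sigma> \<in> G" for \<sigma> t
    unfolding w_def P_def poly_poly_of_coeffs
    by (rule Gal_sum_Rats_mult[OF that]) (auto intro: spansD(1)[OF span])
  have "P (\<lambda>x. x) \<noteq> 0"
  proof
    assume "P (\<lambda>x. x) = 0"
    then have "e j = 0" if "j < m" for j
      using poly_of_coeffs_eqD[of m _ "\<lambda>_. 0"] that by (simp add: P_def poly_of_coeffs_def)
    moreover obtain c where "1 = (\<Sum>j<m. c j * e j)"
      using spansD(2)[OF span subfield_1[OF subfield_K]] by blast
    ultimately show False by simp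
  qed
  moreover have "P \<sigma> \<noteq> P \<tau>" if "\<sigma> \<in> G" "\<tau> \<in> G" "\<sigma> \<noteq> \<tau>" for \<sigma> \<tau>
    using that Gal_eqI[OF span] poly_of_coeffs_eqD unfolding P_def by blast
  moreover define Ps
    where "Ps = insert (P (\<lambda>x. x)) ((\<lambda>(\<sigma>, \<tau>). P \<sigma> - P \<tau>) ` {(\<sigma>, \<tau>) \<in> G \<times> G. \<sigma> \<noteq> \<tau>})"
  ultimately have "0 \<notin> Ps" by auto
  moreover have "finite {(\<sigma>, \<tau>) \<in> G \<times> G. \<sigma> \<noteq> \<tau>}"
    by (rule finite_subset[of _ "G \<times> G"]) (use finite_Gal in auto)
  then have "finite Ps" by (simp add: Ps_def)
  moreover have "inj (of_nat :: nat \<Rightarrow> complex)" by (rule injI) simp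
  ultimately obtain t where t: "\<And>p. p \<in> Ps \<Longrightarrow> poly p (of_nat t) \<noteq> 0"
    using exists_not_root_in_range by metis
  show ?thesis
  proof (rule that[OF w])
    show "w t \<noteq> 0" using t[of "P (\<lambda>x. x)"] conj[OF id_in_Gal] by (simp add: Ps_def)
    fix \<sigma> \<tau> assume "\<sigma> \<in> G" "\<tau> \<in> G" "\<sigma> \<noteq> \<tau>"
    then have "poly (P \<sigma> - P \<tau>) (of_nat t) \<noteq> 0" by (intro t) (auto simp: Ps_def)
    then show "\<sigma> (w t) \<noteq> \<tau> (w t)" using conj[OF \<open>\<sigma> \<in> G\<close>] conj[OF \<open>\<tau> \<in> G\<close>] by simp
  qed
qed

lemma exists_integral_separating_element:
  obtains w where "w \<in> ring_of_integers K" "w \<noteq> 0"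
    "\<And>\<sigma> \<tau>. \<sigma> \<in> G \<Longrightarrow> \<tau> \<in> G \<Longrightarrow> \<sigma> \<noteq> \<tau> \<Longrightarrow> \<sigma> w \<noteq> \<tau> w"
proof -
  obtain w where w: "w \<in> K" "w \<noteq> 0"
    and sep: "\<And>\<sigma> \<tau>. \<sigma> \<in> G \<Longrightarrow> \<tau> \<in> G \<Longrightarrow> \<sigma> \<noteq> \<tau> \<Longrightarrow> \<sigma> w \<noteq> \<tau> w"
    using exists_separating_element by blast
  obtain a :: int where a: "a \<noteq> 0" "algebraic_int (of_int a * w)"
    using algebraic_imp_algebraic_int_multiple[OF K_algebraic[OF w(1)]] by blast
  have aK: "of_int a \<in> K" by (rule subfield_of_int[OF subfield_K])
  have conj: "\<sigma> (of_int a * w) = of_int a * \<sigma> w" if "\<sigma> \<in> G" for \<sigma>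
    using Gal_mult[OF that aK w(1)] Gal_fixes_Rats[OF that, of "of_int a"] by simp
  show ?thesis
  proof (rule that[of "of_int a * w"])
    show "of_int a * w \<in> ring_of_integers K"
      using a(2) subfield_mult[OF subfield_K aK w(1)] by (simp add: ring_of_integers_def)
    show "of_int a * w \<noteq> 0" using a(1) w(2) by simp
    fix \<sigma> \<tau> assume "\<sigma> \<in> G" "\<tau> \<in> G" "\<sigma> \<noteq> \<tau>"
    then show "\<sigma> (of_int a * w) \<noteq> \<tau> (of_int a * w)"
      using sep conj[of \<sigma>] conj[of \<tau>] a(1) by simp
  qed
qed

end

context galois_setting
begin

lemma map_poly_Gal_sum_orbit:
  assumes "\<sigma> \<in> G" and over: "\<And>\<gamma>. \<gamma> \<in> G \<Longrightarrow> poly_over K (f \<gamma>)"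
    and equivariant: "\<And>\<gamma>. \<gamma> \<in> G \<Longrightarrow> map_poly \<sigma> (f \<gamma>) = f (\<sigma> \<circ> \<gamma>)"
  shows "map_poly \<sigma> (\<Sum>\<gamma>\<in>G. f \<gamma>) = (\<Sum>\<gamma>\<in>G. f \<gamma>)"
proof -
  have "map_poly \<sigma> (\<Sum>\<gamma>\<in>G. f \<gamma>) = (\<Sum>\<gamma>\<in>G. f (\<sigma> \<circ> \<gamma>))"
    using over equivariant by (simp add: subfield_hom.map_poly_hom_sum[OF Gal_hom[OF assms(1)]])
  also have "\<dots> = (\<Sum>\<gamma>\<in>(\<lambda>\<gamma>. \<sigma> \<circ> \<gamma>) ` G. f \<gamma>)"
    using sum.reindex[OF Gal_comp_inj_on[OF assms(1)], of f] by (simp add: o_def)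
  finally show ?thesis unfolding Gal_comp_image[OF assms(1)] .
qed

lemma poly_over_base_if_Gal_invariant:
  assumes "poly_over K p" "\<And>\<sigma>. \<sigma> \<in> G \<Longrightarrow> map_poly \<sigma> p = p"
  shows "poly_over K0 p"
  unfolding poly_over_def
proof
  fix i
  have "\<sigma> (coeff p i) = coeff p i" if "\<sigma> \<in> G" for \<sigma>
    using subfield_hom.coeff_map_poly_hom[OF Gal_hom[OF that], of p i] assms(2)[OF that] by simp
  then show "coeff p i \<in> K0"
    using assms(1) fixed_field unfolding poly_over_def by blast
qed

definition orbit_cofactor :: "complex \<Rightarrow> (complex \<Rightarrow> complex) \<Rightarrow> complex poly" where
  "orbit_cofactor z \<gamma> = (\<Prod>\<delta>\<in>G - {\<gamma>}. [:- \<delta> z, 1:])"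

lemma poly_over_orbit_cofactor: "z \<in> K \<Longrightarrow> poly_over K (orbit_cofactor z \<gamma>)"
  unfolding orbit_cofactor_def
  by (intro poly_over_prod[OF subfield_K] poly_over_linear[OF subfield_K]) (auto intro: Gal_closed)

lemma map_poly_orbit_cofactor:
  assumes "\<sigma> \<in> G" "\<gamma> \<in> G" "z \<in> K"
  shows "map_poly \<sigma> (orbit_cofactor z \<gamma>) = orbit_cofactor z (\<sigma> \<circ> \<gamma>)"
proof -
  interpret \<sigma>: subfield_hom K \<sigma> by (rule Gal_hom[OF assms(1)])
  have "map_poly \<sigma> (orbit_cofactor z \<gamma>) = (\<Prod>\<delta>\<in>G - {\<gamma>}. map_poly \<sigma> [:- \<delta> z, 1:])"
    unfolding orbit_cofactor_def using assms(3)
    by (intro \<sigma>.map_poly_hom_prod poly_over_linear[OF subfield_K]) (auto intro: Gal_closed)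
  also have "\<dots> = (\<Prod>\<delta>\<in>G - {\<gamma>}. [:- (\<sigma> \<circ> \<delta>) z, 1:])"
    by (intro prod.cong refl) (metis DiffD1 Gal_closed assms(3) \<sigma>.map_poly_hom_linear comp_apply)
  also have "\<dots> = (\<Prod>\<delta>\<in>(\<lambda>\<delta>. \<sigma> \<circ> \<delta>) ` (G - {\<gamma>}). [:- \<delta> z, 1:])"
    using prod.reindex[OF inj_on_subset[OF Gal_comp_inj_on[OF assms(1)] Diff_subset],
        of "\<lambda>\<delta>. [:- \<delta> z, 1:]"]
    by (simp add: o_def)
  also have "(\<lambda>\<delta>. \<sigma> \<circ> \<delta>) ` (G - {\<gamma>}) = G - {\<sigma> \<circ> \<gamma>}"
    using inj_on_image_set_diff[OF Gal_comp_inj_on[OF assms(1)], of G "{\<gamma>}"]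
      Gal_comp_image[OF assms(1)] assms(2) by auto
  finally show ?thesis unfolding orbit_cofactor_def .
qed

lemma poly_orbit_cofactor:
  "poly (orbit_cofactor z \<gamma>) z = (\<Prod>\<delta>\<in>G - {\<gamma>}. z - \<delta> z)"
  by (simp add: orbit_cofactor_def poly_prod)

text \<open>Lagrange interpolation along the orbit of \<open>z\<close>: every \<open>y \<in> K\<close> is the quotient of two
  Galois-invariant polynomials evaluated at \<open>z\<close>.\<close>
lemma primitive_element_if_distinct_conjugates:
  assumes "z \<in> K" and distinct: "\<And>\<sigma> \<tau>. \<sigma> \<in> G \<Longrightarrow> \<tau> \<in> G \<Longrightarrow> \<sigma> \<noteq> \<tau> \<Longrightarrow> \<sigma> z \<noteq> \<tau> z"
  shows "primitive_element K0 K z"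
  unfolding primitive_element_def
proof (intro conjI allI impI subsetI)
  fix L y assume "is_subfield L \<and> K0 \<subseteq> L \<and> z \<in> L" and "y \<in> K"
  then have L: "is_subfield L" "K0 \<subseteq> L" "z \<in> L" by auto
  define g where "g = (\<Sum>\<gamma>\<in>G. Polynomial.smult (\<gamma> y) (orbit_cofactor z \<gamma>))"
  define g0 where "g0 = (\<Sum>\<gamma>\<in>G. orbit_cofactor z \<gamma>)"
  have over: "poly_over K (Polynomial.smult (\<gamma> y) (orbit_cofactor z \<gamma>))" if "\<gamma> \<in> G" for \<gamma>
    using that \<open>y \<in> K\<close> \<open>z \<in> K\<close> Gal_closed
    by (intro poly_over_smult[OF subfield_K] poly_over_orbit_cofactor) auto
  have g: "poly_over K0 g"
    unfolding g_def using over \<open>y \<in> K\<close> \<open>z \<in> K\<close> Gal_closed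
    by (intro poly_over_base_if_Gal_invariant poly_over_sum[OF subfield_K] map_poly_Gal_sum_orbit)
      (auto simp: subfield_hom.map_poly_hom_smult[OF Gal_hom] poly_over_orbit_cofactor
        map_poly_orbit_cofactor)
  have g0: "poly_over K0 g0"
    unfolding g0_def using \<open>z \<in> K\<close>
    by (intro poly_over_base_if_Gal_invariant poly_over_sum[OF subfield_K] map_poly_Gal_sum_orbit)
      (auto simp: poly_over_orbit_cofactor map_poly_orbit_cofactor)
  have vanish: "poly (orbit_cofactor z \<gamma>) z = 0" if "\<gamma> \<in> G" "\<gamma> \<noteq> (\<lambda>x. x)" for \<gamma>
    unfolding poly_orbit_cofactor
    by (intro prod_zero bexI[of _ "\<lambda>x. x"]) (use that finite_Gal id_in_Gal in auto)
  then have "poly g z = y * poly (orbit_cofactor z (\<lambda>x. x)) z"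
    and "poly g0 z = poly (orbit_cofactor z (\<lambda>x. x)) z"
    unfolding g_def g0_def poly_sum
    by (simp_all add: sum.remove[OF finite_Gal id_in_Gal] sum.neutral)
  moreover have "poly (orbit_cofactor z (\<lambda>x. x)) z \<noteq> 0"
    unfolding poly_orbit_cofactor using finite_Gal distinct[OF id_in_Gal] by auto
  ultimately have "y = poly g z / poly g0 z" by simp
  moreover have "poly g z \<in> L" "poly g0 z \<in> L"
    using poly_over_poly[OF L(1) poly_over_subset[OF _ L(2)] L(3)] g g0 by auto
  ultimately show "y \<in> L" using subfield_divide[OF L(1)] by simp
qed (use assms in simp)

end

section \<open>Norms over \<open>\<rat>\<close> and non-units\<close>

interpretation of_rat_poly_hom: map_poly_comm_ring_hom "of_rat :: rat \<Rightarrow> complex" ..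

lemma of_rat_of_int_poly: "map_poly (of_rat :: rat \<Rightarrow> complex) (map_poly of_int p) = of_int_poly p"
  by (simp add: map_poly_map_poly o_def)

text \<open>Synthetic division gives \<open>q = (X - s) d + q(s)\<close>, so \<open>-d(z)/q(s)\<close> inverts \<open>z - s\<close> at every
  root \<open>z\<close> of \<open>q\<close>.\<close>
lemma inverse_of_linear_on_roots:
  fixes q :: "rat poly"
  assumes "poly q s \<noteq> 0"
  obtains k :: "rat poly"
    where "\<And>z :: complex. poly (map_poly of_rat q) z = 0 \<Longrightarrow> poly (map_poly of_rat k) z * (z - of_rat s) = 1"
proof -
  define r where "r = poly q s"
  define d where "d = synthetic_div q s"
  have "q = [:- s, 1:] * d + [:r:]" unfolding d_def r_def by (rule synthetic_div_correct'[symmetric])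
  then have "map_poly of_rat q = map_poly of_rat [:- s, 1:] * map_poly of_rat d +
      map_poly (of_rat :: rat \<Rightarrow> complex) [:r:]"
    by (metis of_rat_poly_hom.hom_add of_rat_poly_hom.hom_mult)
  then have q: "map_poly of_rat q = [:- of_rat s, 1:] * map_poly of_rat d + [:of_rat r :: complex:]"
    by (cases "r = 0") (simp_all add: of_rat_minus map_poly_pCons)
  have "poly (map_poly of_rat (Polynomial.smult (- 1 / r) d)) z * (z - of_rat s) = 1"
    if "poly (map_poly of_rat q) z = 0" for z :: complex
  proof -
    have "poly (map_poly of_rat d) z * (z - of_rat s) = - of_rat r"
      using that unfolding q by (simp add: algebra_simps eq_neg_iff_add_eq_0)
    then have "poly (map_poly of_rat (Polynomial.smult (- 1 / r) d)) z * (z - of_rat s) =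
        of_rat (- 1 / r) * - of_rat r"
      by (simp only: of_rat_hom.map_poly_hom_smult poly_smult mult.assoc)
    also have "\<dots> = 1" using assms by (simp add: r_def flip: of_rat_mult)
    finally show ?thesis .
  qed
  then show ?thesis by (rule that)
qed

lemma exists_rat_minimal_polynomial:
  assumes "algebraic_int (w :: complex)"
  obtains q :: "rat poly" where "lead_coeff q = 1" "poly (map_poly of_rat q) w = 0"
    "\<And>f. poly (map_poly of_rat f) w = 0 \<Longrightarrow> q dvd f"
proof -
  define S where "S = {p :: rat poly. p \<noteq> 0 \<and> poly (map_poly of_rat p) w = 0}"
  obtain p0 :: "int poly" where "poly (of_int_poly p0) w = 0" "lead_coeff p0 = 1"
    using assms unfolding algebraic_int_altdef_ipoly by blast
  then have "map_poly of_int p0 \<in> S" unfolding S_def by (auto simp: of_rat_of_int_poly)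
  then obtain p where p: "p \<in> S" and min: "\<And>p'. p' \<in> S \<Longrightarrow> degree p \<le> degree p'"
    using ex_has_least_nat[of "\<lambda>p. p \<in> S" _ degree] by blast
  define q where "q = Polynomial.smult (inverse (lead_coeff p)) p"
  have "p \<noteq> 0" using p by (simp add: S_def)
  then have q: "lead_coeff q = 1" "degree q = degree p" "q \<noteq> 0" by (auto simp: q_def)
  have root: "poly (map_poly of_rat q) w = 0"
    using p by (simp add: S_def q_def of_rat_hom.map_poly_hom_smult)
  have "q dvd f" if f: "poly (map_poly of_rat f) w = 0" for f
  proof (rule ccontr)
    assume "\<not> q dvd f"
    then have "f mod q \<noteq> 0" by (simp add: mod_eq_0_iff_dvd)
    have "map_poly of_rat f = map_poly of_rat q * map_poly of_rat (f div q) +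
        map_poly (of_rat :: rat \<Rightarrow> complex) (f mod q)"
      by (metis div_mult_mod_eq mult.commute of_rat_poly_hom.hom_add of_rat_poly_hom.hom_mult)
    then have "poly (map_poly of_rat (f mod q)) w = 0"
      using f root by (metis add_0 mult_zero_left poly_add poly_mult)
    moreover note \<open>f mod q \<noteq> 0\<close>
    ultimately have "degree p \<le> degree (f mod q)" by (intro min) (simp add: S_def)
    then show False using degree_mod_less_degree[OF q(3) \<open>\<not> q dvd f\<close>] q(2) by simp
  qed
  then show ?thesis using that q(1) root by blast
qed

lemma poly_prod_list_linear_factors:
  "poly (\<Prod>a\<leftarrow>as. [:- a, 1:]) x = (\<Prod>a\<leftarrow>as. x - a :: complex)"
  by (induction as) (simp_all add: algebra_simps)

lemma prod_list_scaled_differences: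
  "(\<Prod>a\<leftarrow>as. c * (a - x)) = (- c) ^ length as * (\<Prod>a\<leftarrow>as. x - a :: complex)"
  by (induction as) (simp_all add: algebra_simps)

lemma prod_list_linear_factors_root:
  "a \<in> set as \<Longrightarrow> poly (\<Prod>b\<leftarrow>as. [:- b, 1:]) a = (0 :: complex)"
  by (simp add: poly_prod_list_linear_factors prod_list_zero_iff)

locale rat_minimal_polynomial =
  fixes w :: complex and q :: "rat poly" and as :: "complex list"
  assumes monic: "lead_coeff q = 1" and root: "poly (map_poly of_rat q) w = 0"
    and minimal: "\<And>f. poly (map_poly of_rat f) w = 0 \<Longrightarrow> q dvd f"
    and factors: "map_poly of_rat q = (\<Prod>a\<leftarrow>as. [:- a, 1:])"
begin

lemma conjugate_root:
  assumes "a \<in> set as" "poly (map_poly of_rat f) w = 0"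
  shows "poly (map_poly of_rat f) a = 0"
proof -
  obtain k where "f = q * k" using minimal[OF assms(2)] by (elim dvdE)
  then have "poly (map_poly of_rat f) a = poly (map_poly of_rat q) a * poly (map_poly of_rat k) a"
    by (simp only: of_rat_poly_hom.hom_mult poly_mult)
  then show ?thesis using prod_list_linear_factors_root[OF assms(1)] by (simp add: factors)
qed

lemma conjugate_algebraic_int:
  assumes "algebraic_int w" "a \<in> set as"
  shows "algebraic_int a"
proof -
  obtain p :: "int poly" where p: "poly (of_int_poly p) w = 0" "lead_coeff p = 1"
    using assms(1) unfolding algebraic_int_altdef_ipoly by blast
  then have "poly (of_int_poly p) a = 0"
    using conjugate_root[OF assms(2), of "map_poly of_int p"] by (simp add: of_rat_of_int_poly)
  then show ?thesis using p(2) unfolding algebraic_int_altdef_ipoly by blast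
qed

lemma conjugate_algebraic_int_poly:
  assumes "algebraic_int (poly (map_poly of_rat k) w)" "a \<in> set as"
  shows "algebraic_int (poly (map_poly of_rat k) a)"
proof -
  obtain P :: "int poly" where P: "poly (of_int_poly P) (poly (map_poly of_rat k) w) = 0" "lead_coeff P = 1"
    using assms(1) unfolding algebraic_int_altdef_ipoly by blast
  have F: "poly (map_poly of_rat (pcompose (map_poly of_int P) k)) z =
      poly (of_int_poly P) (poly (map_poly of_rat k) z)" for z :: complex
    by (simp add: of_rat_hom.map_poly_pcompose of_rat_of_int_poly poly_pcompose)
  show ?thesis
    using conjugate_root[OF assms(2), of "pcompose (map_poly of_int P) k"] P
    unfolding F algebraic_int_altdef_ipoly by blast
qed

lemma rational_root_eq:
  assumes "poly q s = 0"
  shows "w = of_rat s"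
proof (rule ccontr)
  assume ne: "w \<noteq> of_rat s"
  have "[:- s, 1:] dvd q" using assms by (simp add: poly_eq_0_iff_dvd)
  then obtain r where r: "q = [:- s, 1:] * r" by (elim dvdE)
  then have "r \<noteq> 0" using monic by auto
  have "poly (map_poly of_rat q) w = poly (map_poly of_rat [:- s, 1:]) w * poly (map_poly of_rat r) w"
    unfolding r of_rat_poly_hom.hom_mult poly_mult ..
  then have "(w - of_rat s) * poly (map_poly of_rat r) w = 0"
    using root by (simp add: map_poly_pCons of_rat_minus)
  then have "q dvd r" using ne by (intro minimal) simp
  then have "degree q \<le> degree r" using \<open>r \<noteq> 0\<close> by (rule dvd_imp_degree_le)
  moreover have "degree q = degree r + 1"
    unfolding r using \<open>r \<noteq> 0\<close> by (subst degree_mult_eq) auto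
  ultimately show False by simp
qed

lemma nonzero_roots:
  assumes "w \<noteq> 0" "a \<in> set as"
  shows "a \<noteq> 0"
proof
  assume "a = 0"
  then have "poly (map_poly of_rat q) (of_rat 0 :: complex) = 0"
    using prod_list_linear_factors_root[OF assms(2)] by (simp add: factors)
  then have "poly q 0 = 0" by (simp only: of_rat_hom.poly_map_poly) simp
  then show False using rational_root_eq assms(1) by simp
qed

lemma roots_nonempty: "as \<noteq> []"
proof
  assume "as = []"
  then have "poly (map_poly of_rat q) w = 1" by (simp add: factors)
  then show False using root by simp
qed

end

context rat_minimal_polynomial
begin

lemma root_of_factors: "a \<in> set as \<Longrightarrow> poly (map_poly of_rat q) a = 0"
  using prod_list_linear_factors_root by (simp add: factors)

text \<open>The norm \<open>\<Prod>\<^sub>a (1 + c a) = (-c)\<^sup>n q(-1/c)\<close> of \<open>1 + c w\<close> is rational; if \<open>1 + c w\<close> is a unit,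
  the inverse is a rational polynomial in \<open>w\<close>, so the norms of both are algebraic integers.\<close>
lemma norm_of_unit_shift:
  assumes w: "algebraic_int w" and y: "algebraic_int y" "(1 + of_int c * w) * y = 1"
  shows "(\<Prod>a\<leftarrow>as. 1 + of_int c * a) \<in> {1, - 1}"
proof (cases "c = 0")
  case False
  define s :: rat where "s = - 1 / of_int c"
  have shift: "1 + of_int c * z = of_int c * (z - of_rat s)" for z :: complex
    using False by (simp add: s_def of_rat_divide of_rat_minus field_simps)
  have "poly q s \<noteq> 0"
    using rational_root_eq y(2) shift[of w] by auto
  then obtain k where k: "\<And>z :: complex. poly (map_poly of_rat q) z = 0 \<Longrightarrow>
      poly (map_poly of_rat k) z * (z - of_rat s) = 1"
    by (rule inverse_of_linear_on_roots) blast
  define inverse_at where "inverse_at z = poly (map_poly of_rat (Polynomial.smult (1 / of_int c) k)) z"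
    for z :: complex
  have inverse_at: "(1 + of_int c * z) * inverse_at z = 1"
    if "poly (map_poly of_rat q) z = 0" for z :: complex
  proof -
    have "(1 + of_int c * z) * inverse_at z = of_int c * (z - of_rat s) * (poly (map_poly of_rat k) z / of_int c)"
      unfolding shift by (simp add: inverse_at_def of_rat_hom.map_poly_hom_smult of_rat_divide)
    also have "\<dots> = poly (map_poly of_rat k) z * (z - of_rat s)" using False by simp
    finally show ?thesis using k[OF that] by simp
  qed
  have "y = inverse_at w"
    using y(2) inverse_at[OF root] by (metis mult.commute mult.left_commute mult_1_right)
  then have "algebraic_int (inverse_at a)" if "a \<in> set as" for a
    using y(1) conjugate_algebraic_int_poly[OF _ that] by (simp add: inverse_at_def)
  then have "algebraic_int (\<Prod>a\<leftarrow>as. inverse_at a)" by blast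
  moreover have "algebraic_int (\<Prod>a\<leftarrow>as. 1 + of_int c * a)"
    using conjugate_algebraic_int[OF w] by blast
  moreover have "(\<Prod>a\<leftarrow>as. 1 + of_int c * a) * (\<Prod>a\<leftarrow>as. inverse_at a) = 1"
    using inverse_at root_of_factors by (induction as) (auto simp: mult_ac)
  moreover have "(\<Prod>a\<leftarrow>as. 1 + of_int c * a) = (- of_int c) ^ length as * of_rat (poly q s)"
    unfolding shift prod_list_scaled_differences poly_prod_list_linear_factors[symmetric]
      factors[symmetric] by simp
  then have "(\<Prod>a\<leftarrow>as. 1 + of_int c * a) \<in> \<rat>" by simp
  ultimately show ?thesis using rational_algebraic_int_unit by blast
qed (induction as, simp_all)

end

lemma degree_prod_list_linear:
  assumes "\<And>a. a \<in> set as \<Longrightarrow> a \<noteq> 0"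
  shows "degree (\<Prod>a\<leftarrow>as. [:1, a:]) = length (as :: complex list)"
  using assms
proof (induction as)
  case (Cons b as)
  then have "(\<Prod>a\<leftarrow>as. [:1, a:]) \<noteq> 0" by (auto simp: prod_list_zero_iff)
  then have "degree ([:1, b:] * (\<Prod>a\<leftarrow>as. [:1, a:])) = degree [:1, b:] + degree (\<Prod>a\<leftarrow>as. [:1, a:])"
    by (intro degree_mult_eq) auto
  then show ?case using Cons by simp
qed simp

lemma exists_nonunit_shift:
  fixes w :: complex
  assumes w: "algebraic_int w" "w \<noteq> 0" and "c \<noteq> (0 :: int)"
  obtains m :: nat where "\<And>y. algebraic_int y \<Longrightarrow> (1 + of_int (int m * c) * w) * y \<noteq> 1"
proof -
  obtain q where q: "lead_coeff q = 1" "poly (map_poly of_rat q) w = 0"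
    "\<And>f. poly (map_poly of_rat f) w = 0 \<Longrightarrow> q dvd f"
    using exists_rat_minimal_polynomial[OF w(1)] by blast
  obtain as where "Polynomial.smult (lead_coeff (map_poly (of_rat :: rat \<Rightarrow> complex) q))
      (\<Prod>a\<leftarrow>as. [:- a, 1:]) = map_poly of_rat q"
    using fundamental_theorem_algebra_factorized by blast
  then have "map_poly of_rat q = (\<Prod>a\<leftarrow>as. [:- a, 1:])" using q(1) by simp
  then interpret rat_minimal_polynomial w q as by unfold_locales (use q in auto)
  define N where "N = (\<Prod>a\<leftarrow>as. [:1, a:])"
  have N: "poly N x = (\<Prod>a\<leftarrow>as. 1 + x * a)" for x
    by (simp add: N_def poly_prod_list o_def mult.commute)
  have "degree N \<ge> 1"
    using degree_prod_list_linear[of as, OF nonzero_roots[OF w(2)]] roots_nonempty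
    by (simp add: N_def Suc_le_eq)
  then have "0 \<notin> {N - 1, N + 1}"
    by (auto simp: eq_neg_iff_add_eq_0[symmetric] dest: arg_cong[where f = degree])
  moreover have "inj (\<lambda>m :: nat. of_int (int m * c) :: complex)"
    using \<open>c \<noteq> 0\<close> by (intro injI) simp
  ultimately obtain m :: nat where m: "\<And>p. p \<in> {N - 1, N + 1} \<Longrightarrow> poly p (of_int (int m * c)) \<noteq> 0"
    using exists_not_root_in_range[of "{N - 1, N + 1}"] by blast
  show ?thesis
  proof (rule that notI)+
    fix y assume "algebraic_int y" "(1 + of_int (int m * c) * w) * y = 1"
    then have "(\<Prod>a\<leftarrow>as. 1 + of_int (int m * c) * a) \<in> {1, - 1}"
      by (rule norm_of_unit_shift[OF w(1)])
    then show False
      using m[of "N - 1"] m[of "N + 1"] N[of "of_int (int m * c)"] by (auto simp: eq_neg_iff_add_eq_0)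
  qed
qed

section \<open>Coprimality in the ring of integers\<close>

definition dvd_in :: "complex set \<Rightarrow> complex \<Rightarrow> complex \<Rightarrow> bool" where
  "dvd_in R a x \<longleftrightarrow> (\<exists>e\<in>R. x = a * e)"

context
  fixes K :: "complex set" assumes K: "is_subfield K"
begin

lemma ring_of_integers_1: "1 \<in> ring_of_integers K"
  and ring_of_integers_of_int: "of_int k \<in> ring_of_integers K"
  and ring_of_integers_add: "x \<in> ring_of_integers K \<Longrightarrow> y \<in> ring_of_integers K \<Longrightarrow> x + y \<in> ring_of_integers K"
  and ring_of_integers_diff: "x \<in> ring_of_integers K \<Longrightarrow> y \<in> ring_of_integers K \<Longrightarrow> x - y \<in> ring_of_integers K"
  and ring_of_integers_mult: "x \<in> ring_of_integers K \<Longrightarrow> y \<in> ring_of_integers K \<Longrightarrow> x * y \<in> ring_of_integers K"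
  and ring_of_integers_uminus: "x \<in> ring_of_integers K \<Longrightarrow> - x \<in> ring_of_integers K"
  using subfield_1[OF K] subfield_of_int[OF K] subfield_add[OF K] subfield_diff[OF K]
    subfield_mult[OF K] subfield_uminus[OF K]
  by (auto simp: ring_of_integers_def)

lemma ring_of_integers_power: "x \<in> ring_of_integers K \<Longrightarrow> x ^ n \<in> ring_of_integers K"
  by (induction n) (auto intro: ring_of_integers_1 ring_of_integers_mult)

lemma ring_of_integers_prod:
  "(\<And>a. a \<in> A \<Longrightarrow> f a \<in> ring_of_integers K) \<Longrightarrow> prod f A \<in> ring_of_integers K"
  by (induction A rule: infinite_finite_induct) (auto intro: ring_of_integers_1 ring_of_integers_mult)

text \<open>If \<open>x\<close> has a monic integer polynomial \<open>a\<^sub>0 + x g(x)\<close> of least degree, then \<open>a\<^sub>0 \<noteq> 0\<close>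
  (otherwise \<open>g\<close> would be a smaller one) and \<open>a\<^sub>0 = x (- g(x))\<close>.\<close>
lemma ring_of_integers_divides_nonzero_int:
  assumes x: "x \<in> ring_of_integers K" "x \<noteq> 0"
  obtains n :: int where "n \<noteq> 0" "dvd_in (ring_of_integers K) x (of_int n)"
proof -
  define S where "S = {p :: int poly. poly (of_int_poly p) x = 0 \<and> lead_coeff p = 1}"
  obtain p0 where "p0 \<in> S"
    using x(1) unfolding ring_of_integers_def algebraic_int_altdef_ipoly S_def by blast
  then obtain p where p: "p \<in> S" and min: "\<And>p'. p' \<in> S \<Longrightarrow> degree p \<le> degree p'"
    using ex_has_least_nat[of "\<lambda>p. p \<in> S" p0 degree] by blast
  obtain a0 g where p_def: "p = pCons a0 g" by (cases p) auto
  have "g \<noteq> 0" using p by (auto simp: S_def p_def)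
  have eval: "poly (of_int_poly p) x = of_int a0 + x * poly (of_int_poly g) x"
    using \<open>g \<noteq> 0\<close> by (simp add: p_def map_poly_pCons)
  have "a0 \<noteq> 0"
  proof
    assume "a0 = 0"
    then have "g \<in> S" using p x(2) \<open>g \<noteq> 0\<close> eval by (auto simp: S_def p_def)
    then show False using min[of g] \<open>g \<noteq> 0\<close> by (simp add: p_def)
  qed
  moreover have "of_int a0 = x * (- poly (of_int_poly g) x)"
    using p eval by (simp add: S_def eq_neg_iff_add_eq_0)
  moreover have "- poly (of_int_poly g) x \<in> ring_of_integers K"
    using x(1) K unfolding ring_of_integers_def
    by (auto intro!: subfield_uminus poly_over_poly simp: poly_over_def coeff_map_poly subfield_of_int)
  ultimately show ?thesis using that unfolding dvd_in_def by blast
qed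

lemma dvd_in_of_int_mult:
  "dvd_in (ring_of_integers K) a (of_int c) \<Longrightarrow> dvd_in (ring_of_integers K) a (of_int (k * c))"
  unfolding dvd_in_def by (metis mult.left_commute of_int_mult ring_of_integers_mult ring_of_integers_of_int)

lemma exists_common_int_multiple:
  assumes "finite A" "A \<subseteq> ring_of_integers K" "0 \<notin> A"
  obtains n :: int where "n \<noteq> 0" "\<And>a. a \<in> A \<Longrightarrow> dvd_in (ring_of_integers K) a (of_int n)"
proof -
  have "prod id A \<in> ring_of_integers K" "prod id A \<noteq> 0"
    using assms by (auto intro: ring_of_integers_prod)
  then obtain n e where n: "n \<noteq> 0" "e \<in> ring_of_integers K" "of_int n = prod id A * e"
    by (metis ring_of_integers_divides_nonzero_int dvd_in_def)
  have "dvd_in (ring_of_integers K) a (of_int n)" if "a \<in> A" for a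
    unfolding dvd_in_def
  proof
    show "of_int n = a * (prod id (A - {a}) * e)"
      using n(3) prod.remove[OF assms(1) that, of id] by (simp add: mult.assoc)
    show "prod id (A - {a}) * e \<in> ring_of_integers K"
      using assms(2) n(2) by (auto intro: ring_of_integers_mult ring_of_integers_prod)
  qed
  then show ?thesis using that n(1) by blast
qed

text \<open>With \<open>c = (a - b) e\<close>: \<open>(e a\<^sup>2 - c a + 1)(1 + c a) - e a\<^sup>2 (1 + c b) = 1 + c a\<^sup>2 ((a - b) e - c) = 1\<close>.\<close>
lemma coprime_in_shifts:
  assumes R: "a \<in> ring_of_integers K" "b \<in> ring_of_integers K"
    and "dvd_in (ring_of_integers K) (a - b) c"
  shows "coprime_in (ring_of_integers K) (1 + c * a) (1 + c * b)"
proof -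
  obtain e where e: "e \<in> ring_of_integers K" and c: "c = (a - b) * e"
    using assms(3) unfolding dvd_in_def by blast
  show ?thesis
    unfolding coprime_in_def
  proof (intro bexI)
    show "(e * a\<^sup>2 - c * a + 1) * (1 + c * a) + (- (e * a\<^sup>2)) * (1 + c * b) = 1"
      by (simp add: c algebra_simps power2_eq_square)
    have "c \<in> ring_of_integers K" using R e by (simp add: c ring_of_integers_diff ring_of_integers_mult)
    then show "e * a\<^sup>2 - c * a + 1 \<in> ring_of_integers K" "- (e * a\<^sup>2) \<in> ring_of_integers K"
      using R e by (auto intro!: ring_of_integers_add ring_of_integers_diff ring_of_integers_mult
          ring_of_integers_uminus ring_of_integers_power ring_of_integers_1)
  qed
qed

lemma coprime_in_shift_multiple:
  assumes "a \<in> ring_of_integers K" "dvd_in (ring_of_integers K) b c"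
  shows "coprime_in (ring_of_integers K) (1 + c * a) b"
proof -
  obtain e where e: "e \<in> ring_of_integers K" and c: "c = b * e"
    using assms(2) unfolding dvd_in_def by blast
  show ?thesis
    unfolding coprime_in_def
  proof (intro bexI)
    show "1 * (1 + c * a) + (- (e * a)) * b = 1" by (simp add: c algebra_simps)
  qed (use assms(1) e in \<open>auto intro: ring_of_integers_1 ring_of_integers_uminus ring_of_integers_mult\<close>)
qed

end

context galois_setting
begin

lemma Gal_shift:
  assumes "\<gamma> \<in> G" "w \<in> K"
  shows "\<gamma> (1 + of_int c * w) = 1 + of_int c * \<gamma> w"
  using assms subfield_of_int[OF subfield_K] subfield_1[OF subfield_K]
  by (simp add: Gal_add Gal_mult subfield_mult[OF subfield_K] Gal_fixes_Rats)

lemma Gal_ring_of_integers: "\<gamma> \<in> G \<Longrightarrow> w \<in> ring_of_integers K \<Longrightarrow> \<gamma> w \<in> ring_of_integers K"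
  using Gal_closed Gal_algebraic_int by (simp add: ring_of_integers_def)

lemma primitive_shift:
  assumes "w \<in> K" "c \<noteq> 0" and sep: "\<And>\<gamma> \<delta>. \<gamma> \<in> G \<Longrightarrow> \<delta> \<in> G \<Longrightarrow> \<gamma> \<noteq> \<delta> \<Longrightarrow> \<gamma> w \<noteq> \<delta> w"
  shows "primitive_element K0 K (1 + of_int c * w)"
proof (rule primitive_element_if_distinct_conjugates)
  show "1 + of_int c * w \<in> K"
    using assms(1) subfield_K by (intro subfield_add subfield_mult subfield_1 subfield_of_int)
  fix \<sigma> \<tau> assume "\<sigma> \<in> G" "\<tau> \<in> G" "\<sigma> \<noteq> \<tau>"
  then show "\<sigma> (1 + of_int c * w) \<noteq> \<tau> (1 + of_int c * w)"
    using Gal_shift[OF \<open>\<sigma> \<in> G\<close> assms(1)] Gal_shift[OF \<open>\<tau> \<in> G\<close> assms(1)] sep[of \<sigma> \<tau>]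
      \<open>c \<noteq> 0\<close> by simp
qed

lemma coprime_conjugates_of_shift:
  assumes "w \<in> ring_of_integers K" "\<gamma> \<in> G" "\<delta> \<in> G"
    and "dvd_in (ring_of_integers K) (\<gamma> w - \<delta> w) (of_int c)"
  shows "coprime_in (ring_of_integers K) (\<gamma> (1 + of_int c * w)) (\<delta> (1 + of_int c * w))"
  using coprime_in_shifts[OF subfield_K Gal_ring_of_integers[OF assms(2,1)]
      Gal_ring_of_integers[OF assms(3,1)] assms(4)] assms(1-3)
  by (simp add: Gal_shift ring_of_integers_def)

lemma conjugate_of_shift_coprime:
  assumes "w \<in> ring_of_integers K" "\<gamma> \<in> G" "dvd_in (ring_of_integers K) b (of_int c)"
  shows "coprime_in (ring_of_integers K) (\<gamma> (1 + of_int c * w)) b"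
  using coprime_in_shift_multiple[OF subfield_K Gal_ring_of_integers[OF assms(2,1)] assms(3)] assms(1,2)
  by (simp add: Gal_shift ring_of_integers_def)

lemma exists_int_divisible_by_conjugate_differences:
  assumes w: "w \<in> ring_of_integers K"
    and sep: "\<And>\<gamma> \<delta>. \<gamma> \<in> G \<Longrightarrow> \<delta> \<in> G \<Longrightarrow> \<gamma> \<noteq> \<delta> \<Longrightarrow> \<gamma> w \<noteq> \<delta> w"
    and b: "b \<in> ring_of_integers K" "b \<noteq> 0"
  obtains c :: int where "c \<noteq> 0" "dvd_in (ring_of_integers K) b (of_int c)"
    "\<And>\<gamma> \<delta>. \<gamma> \<in> G \<Longrightarrow> \<delta> \<in> G \<Longrightarrow> \<gamma> \<noteq> \<delta> \<Longrightarrow> dvd_in (ring_of_integers K) (\<gamma> w - \<delta> w) (of_int c)"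
proof -
  define A where "A = insert b ((\<lambda>(\<gamma>, \<delta>). \<gamma> w - \<delta> w) ` {(\<gamma>, \<delta>) \<in> G \<times> G. \<gamma> \<noteq> \<delta>})"
  have "finite {(\<gamma>, \<delta>) \<in> G \<times> G. \<gamma> \<noteq> \<delta>}"
    by (rule finite_subset[of _ "G \<times> G"]) (use finite_Gal in auto)
  then have "finite A" by (simp add: A_def)
  moreover have "A \<subseteq> ring_of_integers K"
    using b(1) Gal_ring_of_integers[OF _ w] by (auto simp: A_def intro: ring_of_integers_diff[OF subfield_K])
  moreover have "0 \<notin> A" using b(2) sep by (auto simp: A_def)
  ultimately obtain c :: int where "c \<noteq> 0" and c: "\<And>a. a \<in> A \<Longrightarrow> dvd_in (ring_of_integers K) a (of_int c)"
    by (rule exists_common_int_multiple[OF subfield_K]) blast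
  moreover have "\<gamma> w - \<delta> w \<in> A" if "\<gamma> \<in> G" "\<delta> \<in> G" "\<gamma> \<noteq> \<delta>" for \<gamma> \<delta>
    unfolding A_def using that by (intro insertI2 image_eqI[of _ _ "(\<gamma>, \<delta>)"]) auto
  ultimately show ?thesis using that by (simp add: A_def)
qed

end

theorem lemma6p4:
  fixes K0 K :: "complex set" and b :: complex
  assumes "number_field K0"
    and "galois_ext K0 K"
    and "b \<in> ring_of_integers K" and "b \<noteq> 0"
  shows "\<exists>z\<in>ring_of_integers K. \<not> is_unit_in (ring_of_integers K) z \<and>
           primitive_element K0 K z \<and>
           (\<forall>\<gamma>\<in>Gal K0 K. \<forall>\<delta>\<in>Gal K0 K. \<gamma> \<noteq> \<delta> \<longrightarrow>
               coprime_in (ring_of_integers K) (\<gamma> z) (\<delta> z)) \<and>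
           (\<forall>\<gamma>\<in>Gal K0 K. coprime_in (ring_of_integers K) (\<gamma> z) b)"
proof -
  interpret galois_setting K0 K using assms(1,2) by unfold_locales
  let ?R = "ring_of_integers K"
  obtain w where w: "w \<in> ?R" "w \<noteq> 0" and sep: "\<And>\<gamma> \<delta>. \<gamma> \<in> G \<Longrightarrow> \<delta> \<in> G \<Longrightarrow> \<gamma> \<noteq> \<delta> \<Longrightarrow> \<gamma> w \<noteq> \<delta> w"
    using exists_integral_separating_element by blast
  obtain c :: int where "c \<noteq> 0" and b: "dvd_in ?R b (of_int c)"
    and diff: "\<And>\<gamma> \<delta>. \<gamma> \<in> G \<Longrightarrow> \<delta> \<in> G \<Longrightarrow> \<gamma> \<noteq> \<delta> \<Longrightarrow> dvd_in ?R (\<gamma> w - \<delta> w) (of_int c)"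
    using exists_int_divisible_by_conjugate_differences[of w b] w(1) sep assms(3,4) by blast
  obtain m :: nat where m: "\<And>y. algebraic_int y \<Longrightarrow> (1 + of_int (int m * c) * w) * y \<noteq> 1"
    using exists_nonunit_shift[OF _ w(2) \<open>c \<noteq> 0\<close>] w(1) by (auto simp: ring_of_integers_def)
  have "m \<noteq> 0" using m[of 1] by auto
  show ?thesis
  proof (intro bexI[of _ "1 + of_int (int m * c) * w"] conjI ballI impI)
    show "1 + of_int (int m * c) * w \<in> ?R"
      by (intro ring_of_integers_add ring_of_integers_mult ring_of_integers_1
          ring_of_integers_of_int subfield_K w(1))
    show "\<not> is_unit_in ?R (1 + of_int (int m * c) * w)"
      using m by (auto simp: is_unit_in_def ring_of_integers_def)
    show "primitive_element K0 K (1 + of_int (int m * c) * w)"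
      by (rule primitive_shift) (use w(1) sep \<open>m \<noteq> 0\<close> \<open>c \<noteq> 0\<close> in \<open>auto simp: ring_of_integers_def\<close>)
    show "coprime_in ?R (\<gamma> (1 + of_int (int m * c) * w)) b" if "\<gamma> \<in> G" for \<gamma>
      by (rule conjugate_of_shift_coprime[OF w(1) that dvd_in_of_int_mult[OF subfield_K b]])
    show "coprime_in ?R (\<gamma> (1 + of_int (int m * c) * w)) (\<delta> (1 + of_int (int m * c) * w))"
      if "\<gamma> \<in> G" "\<delta> \<in> G" "\<gamma> \<noteq> \<delta>" for \<gamma> \<delta>
      by (rule coprime_conjugates_of_shift[OF w(1) that(1,2) dvd_in_of_int_mult[OF subfield_K diff[OF that]]])
  qed
qed

end
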